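(* Let $\mathcal E$ be a reflexive nonlinear Dirichlet form on $L^2(\mu)$ and for $r>0$ let $C_r\colon\mathbb R\to\mathbb R$, $C_r(x)=(x\wedge r)\vee(-r)$. For all $f\in M(\mathcal E)$ we have $\lim_{\varepsilon\to0+}C_\varepsilon(f)=0$ and $\lim_{R\to\infty}C_R(f)=f$ with respect to $\|\cdot\|_L$. In particular, $L^1(\mu)\cap L^\infty(\mu)\cap M(\mathcal E)$ is dense in $(M(\mathcal E),\|\cdot\|_L)$.
   Context: $(X,\mathfrak A,\mu)$ is a $\sigma$-finite measure space. A nonlinear Dirichlet form is a lower semicontinuous convex functional $\mathcal E\colon L^2(\mu)\to[0,\infty]$ with $\mathcal E(-f)=\mathcal E(f)$, $\mathcal E(0)=0$, such that for every 1-Lipschitz $C\colon\mathbb R\to\mathbb R$ with $C(0)=0$ (normal contraction) one has $\mathcal E(f+Cg)+\mathcal E(f-Cg)\le\mathcal E(f+g)+\mathcal E(f-g)$ for all $f,g$. $M(\mathcal E)=\{f\in L^2(\mu):\lim_{\lambda\to0+}\mathcal E(\lambda f)=0\}$, $\|f\|_L=\inf\{\lambda>0:\mathcal E(\lambda^{-1}f)\le1\}$. $\mathcal E$ is reflexive if the image of $M(\mathcal E)$ in the bidual of the seminormed space $(M(\mathcal E),\|\cdot\|_L)$ under the canonical map is norm dense. *)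

theory Defs
  imports "HOL-Analysis.Analysis"
begin

text \<open>L^2(mu) represented by square-integrable Borel functions (classes modulo a.e.
equality are handled by requiring the functional to respect a.e. equality).\<close>
definition L2 :: "'a measure \<Rightarrow> ('a \<Rightarrow> real) set" where
  "L2 M = {f. f \<in> borel_measurable M \<and> integrable M (\<lambda>x. (f x)\<^sup>2)}"

definition normal_contraction :: "(real \<Rightarrow> real) \<Rightarrow> bool" where
  "normal_contraction C \<longleftrightarrow> C 0 = 0 \<and> (\<forall>x y. \<bar>C x - C y\<bar> \<le> \<bar>x - y\<bar>)"

definition nonlinear_dirichlet_form :: "'a measure \<Rightarrow> (('a \<Rightarrow> real) \<Rightarrow> ennreal) \<Rightarrow> bool" where
  "nonlinear_dirichlet_form M E \<longleftrightarrow>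
     \<comment> \<open>well defined on L^2 classes\<close>
     (\<forall>f\<in>L2 M. \<forall>g\<in>L2 M. (AE x in M. f x = g x) \<longrightarrow> E f = E g) \<and>
     \<comment> \<open>lower semicontinuity w.r.t. the L^2 norm\<close>
     (\<forall>fs f. (\<forall>n. fs n \<in> L2 M) \<longrightarrow> f \<in> L2 M \<longrightarrow>
        ((\<lambda>n. integral\<^sup>L M (\<lambda>x. (fs n x - f x)\<^sup>2)) \<longlonglongrightarrow> 0) \<longrightarrow>
        E f \<le> liminf (\<lambda>n. E (fs n))) \<and>
     \<comment> \<open>convexity\<close>
     (\<forall>f\<in>L2 M. \<forall>g\<in>L2 M. \<forall>t::real. 0 \<le> t \<and> t \<le> 1 \<longrightarrow>
        E (\<lambda>x. t * f x + (1 - t) * g x) \<le> ennreal t * E f + ennreal (1 - t) * E g) \<and>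
     \<comment> \<open>symmetry and normalisation\<close>
     (\<forall>f\<in>L2 M. E (\<lambda>x. - f x) = E f) \<and>
     E (\<lambda>x. 0) = 0 \<and>
     \<comment> \<open>contraction property\<close>
     (\<forall>C. normal_contraction C \<longrightarrow> (\<forall>f\<in>L2 M. \<forall>g\<in>L2 M.
        E (\<lambda>x. f x + C (g x)) + E (\<lambda>x. f x - C (g x))
          \<le> E (\<lambda>x. f x + g x) + E (\<lambda>x. f x - g x)))"

definition MSet :: "'a measure \<Rightarrow> (('a \<Rightarrow> real) \<Rightarrow> ennreal) \<Rightarrow> ('a \<Rightarrow> real) set" where
  "MSet M E = {f \<in> L2 M. ((\<lambda>l::real. E (\<lambda>x. l * f x)) \<longlongrightarrow> 0) (at_right 0)}"

definition lux_norm :: "(('a \<Rightarrow> real) \<Rightarrow> ennreal) \<Rightarrow> ('a \<Rightarrow> real) \<Rightarrow> real" where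
  "lux_norm E f = Inf {l::real. l > 0 \<and> E (\<lambda>x. f x / l) \<le> 1}"

definition dual_space :: "('b \<Rightarrow> real) set \<Rightarrow> (('b \<Rightarrow> real) \<Rightarrow> real) \<Rightarrow> ((('b \<Rightarrow> real) \<Rightarrow> real) set)" where
  "dual_space V N = {\<phi>. (\<forall>f\<in>V. \<forall>g\<in>V. \<forall>a b. \<phi> (\<lambda>x. a * f x + b * g x) = a * \<phi> f + b * \<phi> g)
                        \<and> (\<exists>K. \<forall>f\<in>V. \<bar>\<phi> f\<bar> \<le> K * N f)}"

definition dual_norm :: "('b \<Rightarrow> real) set \<Rightarrow> (('b \<Rightarrow> real) \<Rightarrow> real) \<Rightarrow> (('b \<Rightarrow> real) \<Rightarrow> real) \<Rightarrow> real" where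
  "dual_norm V N \<phi> = Sup ((\<lambda>f. \<bar>\<phi> f\<bar>) ` {f \<in> V. N f \<le> 1})"

definition bidual_space :: "('b \<Rightarrow> real) set \<Rightarrow> (('b \<Rightarrow> real) \<Rightarrow> real)
     \<Rightarrow> (((('b \<Rightarrow> real) \<Rightarrow> real) \<Rightarrow> real) set)" where
  "bidual_space V N = {\<Psi>. (\<forall>\<phi>\<in>dual_space V N. \<forall>\<psi>\<in>dual_space V N. \<forall>a b.
                            \<Psi> (\<lambda>f. a * \<phi> f + b * \<psi> f) = a * \<Psi> \<phi> + b * \<Psi> \<psi>)
                         \<and> (\<exists>K. \<forall>\<phi>\<in>dual_space V N. \<bar>\<Psi> \<phi>\<bar> \<le> K * dual_norm V N \<phi>)}"

definition bidual_norm :: "('b \<Rightarrow> real) set \<Rightarrow> (('b \<Rightarrow> real) \<Rightarrow> real)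
     \<Rightarrow> ((('b \<Rightarrow> real) \<Rightarrow> real) \<Rightarrow> real) \<Rightarrow> real" where
  "bidual_norm V N \<Psi> = Sup ((\<lambda>\<phi>. \<bar>\<Psi> \<phi>\<bar>) ` {\<phi> \<in> dual_space V N. dual_norm V N \<phi> \<le> 1})"

definition canonical_emb :: "('b \<Rightarrow> real) \<Rightarrow> (('b \<Rightarrow> real) \<Rightarrow> real) \<Rightarrow> real" where
  "canonical_emb f = (\<lambda>\<phi>. \<phi> f)"

definition reflexive_form :: "'a measure \<Rightarrow> (('a \<Rightarrow> real) \<Rightarrow> ennreal) \<Rightarrow> bool" where
  "reflexive_form M E \<longleftrightarrow>
     (\<forall>\<Psi>\<in>bidual_space (MSet M E) (lux_norm E). \<forall>e>0. \<exists>f\<in>MSet M E.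
        bidual_norm (MSet M E) (lux_norm E) (\<lambda>\<phi>. \<Psi> \<phi> - canonical_emb f \<phi>) < e)"

definition clamp :: "real \<Rightarrow> real \<Rightarrow> real" where
  "clamp r x = max (min x r) (- r)"

end

theory Submission
  imports Defs
begin

text \<open>
  Everything rests on one approximation principle. Let \<open>C\<^sub>k\<close> be convex subsets of \<open>M(\<E>)\<close> and
  \<open>x\<^sub>n \<in> C\<^sub>k\<close> for \<open>n \<ge> k\<close>, with \<open>\<parallel>x\<^sub>n\<parallel>\<^sub>L\<close> bounded and the \<open>L\<^sup>2\<close>-norms on \<open>C\<^sub>k\<close> tending to \<open>0\<close>.
  A Banach limit of the sequences \<open>\<phi>(x\<^sub>n)\<close> is a weak* cluster point \<open>\<Psi>\<close> of \<open>(x\<^sub>n)\<close> in the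
  bidual, and by reflexivity \<open>\<Psi>\<close> is approximated by some \<open>g \<in> M(\<E>)\<close>. Hahn--Banach separation
  shows that every \<open>C\<^sub>k\<close> meets the \<open>\<parallel>\<cdot>\<parallel>\<^sub>L\<close>-ball of radius \<open>\<epsilon>/2\<close> around \<open>g\<close>; these points
  tend to \<open>0\<close> in \<open>L\<^sup>2\<close>, so lower semicontinuity of \<open>\<E>\<close> gives \<open>\<parallel>g\<parallel>\<^sub>L \<le> \<epsilon>/2\<close>, and some \<open>C\<^sub>k\<close>
  contains an element of norm \<open>< \<epsilon>\<close>.

  For \<open>C\<^sub>k\<close> we take images of \<open>f\<close> under convex combinations of the truncations \<open>C\<^sub>\<epsilon>\<close>
  (resp. of \<open>id - C\<^sub>R\<close>). Such a combination \<open>T\<close> still satisfies \<open>C\<^sub>y \<circ> T = C\<^sub>y\<close> for small \<open>y\<close>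
  (resp. \<open>id - C\<^sub>R = (id - C\<^bsub>R-c\<^esub>) \<circ> T\<close> for large \<open>R\<close>), and normal contractions do not
  increase \<open>\<parallel>\<cdot>\<parallel>\<^sub>L\<close>; this gives both limits. For the density statement, \<open>C\<^sub>R f - C\<^sub>d f\<close> is
  bounded, integrable since it vanishes where \<open>|f| \<le> d\<close>, and close to \<open>f\<close>.
\<close>

section \<open>Sublinear functionals and the Hahn--Banach theorem\<close>

definition fun_subspace :: "('b \<Rightarrow> real) set \<Rightarrow> bool" where
  "fun_subspace V \<longleftrightarrow> (\<lambda>x. 0) \<in> V \<and> (\<forall>f\<in>V. \<forall>g\<in>V. \<forall>a b. (\<lambda>x. a * f x + b * g x) \<in> V)"

definition fun_convex :: "('b \<Rightarrow> real) set \<Rightarrow> bool" where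
  "fun_convex D \<longleftrightarrow>
     (\<forall>f\<in>D. \<forall>g\<in>D. \<forall>t. 0 \<le> t \<and> t \<le> 1 \<longrightarrow> (\<lambda>x. t * f x + (1 - t) * g x) \<in> D)"

definition linear_on :: "('b \<Rightarrow> real) set \<Rightarrow> (('b \<Rightarrow> real) \<Rightarrow> real) \<Rightarrow> bool" where
  "linear_on V \<phi> \<longleftrightarrow> (\<forall>f\<in>V. \<forall>g\<in>V. \<forall>a b. \<phi> (\<lambda>x. a * f x + b * g x) = a * \<phi> f + b * \<phi> g)"

definition sublinear_on :: "('b \<Rightarrow> real) set \<Rightarrow> (('b \<Rightarrow> real) \<Rightarrow> real) \<Rightarrow> bool" where
  "sublinear_on V p \<longleftrightarrow> (\<forall>f\<in>V. \<forall>g\<in>V. p (\<lambda>x. f x + g x) \<le> p f + p g)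
      \<and> (\<forall>f\<in>V. \<forall>c\<ge>0. p (\<lambda>x. c * f x) = c * p f)"

definition seminorm_on :: "('b \<Rightarrow> real) set \<Rightarrow> (('b \<Rightarrow> real) \<Rightarrow> real) \<Rightarrow> bool" where
  "seminorm_on V N \<longleftrightarrow> sublinear_on V N \<and> (\<forall>f\<in>V. N (\<lambda>x. - f x) = N f)"

lemma fun_subspace_zero: "fun_subspace V \<Longrightarrow> (\<lambda>x. 0) \<in> V"
  unfolding fun_subspace_def by blast

lemma fun_subspace_lincomb:
  "fun_subspace V \<Longrightarrow> f \<in> V \<Longrightarrow> g \<in> V \<Longrightarrow> (\<lambda>x. a * f x + b * g x) \<in> V"
  unfolding fun_subspace_def by blast

lemma fun_subspace_add: "fun_subspace V \<Longrightarrow> f \<in> V \<Longrightarrow> g \<in> V \<Longrightarrow> (\<lambda>x. f x + g x) \<in> V"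
  using fun_subspace_lincomb[of V f g 1 1] by simp

lemma fun_subspace_diff: "fun_subspace V \<Longrightarrow> f \<in> V \<Longrightarrow> g \<in> V \<Longrightarrow> (\<lambda>x. f x - g x) \<in> V"
  using fun_subspace_lincomb[of V f g 1 "-1"] by simp

lemma fun_subspace_scale: "fun_subspace V \<Longrightarrow> f \<in> V \<Longrightarrow> (\<lambda>x. c * f x) \<in> V"
  using fun_subspace_lincomb[of V f f c 0] by simp

lemma fun_subspace_uminus: "fun_subspace V \<Longrightarrow> f \<in> V \<Longrightarrow> (\<lambda>x. - f x) \<in> V"
  using fun_subspace_scale[of V f "-1"] by simp

lemma fun_subspace_add_scale:
  "fun_subspace V \<Longrightarrow> f \<in> V \<Longrightarrow> g \<in> V \<Longrightarrow> (\<lambda>x. f x + c * g x) \<in> V"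
  using fun_subspace_lincomb[of V f g 1 c] by simp

lemma fun_convexD:
  "fun_convex D \<Longrightarrow> f \<in> D \<Longrightarrow> g \<in> D \<Longrightarrow> 0 \<le> t \<Longrightarrow> t \<le> 1 \<Longrightarrow>
    (\<lambda>x. t * f x + (1 - t) * g x) \<in> D"
  unfolding fun_convex_def by blast

lemma fun_convex_comp_image:
  assumes "fun_convex Ts"
  shows "fun_convex ((\<lambda>T x. T (f x)) ` Ts)"
  unfolding fun_convex_def
proof (intro ballI allI impI)
  fix h1 h2 and t :: real
  assume "h1 \<in> (\<lambda>T x. T (f x)) ` Ts" "h2 \<in> (\<lambda>T x. T (f x)) ` Ts" and t: "0 \<le> t \<and> t \<le> 1"
  then obtain T1 T2 where T: "T1 \<in> Ts" "T2 \<in> Ts" "h1 = (\<lambda>x. T1 (f x))" "h2 = (\<lambda>x. T2 (f x))"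
    by blast
  have "(\<lambda>u. t * T1 u + (1 - t) * T2 u) \<in> Ts" using fun_convexD[OF assms T(1,2)] t by blast
  then show "(\<lambda>x. t * h1 x + (1 - t) * h2 x) \<in> (\<lambda>T x. T (f x)) ` Ts"
    unfolding T(3,4) by (rule rev_image_eqI) simp
qed

lemma linear_onD:
  "linear_on V \<phi> \<Longrightarrow> f \<in> V \<Longrightarrow> g \<in> V \<Longrightarrow> \<phi> (\<lambda>x. a * f x + b * g x) = a * \<phi> f + b * \<phi> g"
  unfolding linear_on_def by blast

lemma linear_on_scale: "linear_on V \<phi> \<Longrightarrow> f \<in> V \<Longrightarrow> \<phi> (\<lambda>x. c * f x) = c * \<phi> f"
  using linear_onD[of V \<phi> f f c 0] by simp

lemma linear_on_diff:
  "linear_on V \<phi> \<Longrightarrow> f \<in> V \<Longrightarrow> g \<in> V \<Longrightarrow> \<phi> (\<lambda>x. f x - g x) = \<phi> f - \<phi> g"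
  using linear_onD[of V \<phi> f g 1 "-1"] by simp

lemma linear_on_uminus: "linear_on V \<phi> \<Longrightarrow> f \<in> V \<Longrightarrow> \<phi> (\<lambda>x. - f x) = - \<phi> f"
  using linear_on_scale[of V \<phi> f "-1"] by simp

lemma sublinear_on_add: "sublinear_on V p \<Longrightarrow> f \<in> V \<Longrightarrow> g \<in> V \<Longrightarrow> p (\<lambda>x. f x + g x) \<le> p f + p g"
  unfolding sublinear_on_def by blast

lemma sublinear_on_scale: "sublinear_on V p \<Longrightarrow> f \<in> V \<Longrightarrow> 0 \<le> c \<Longrightarrow> p (\<lambda>x. c * f x) = c * p f"
  unfolding sublinear_on_def by blast

lemma sublinear_on_zero: "sublinear_on V p \<Longrightarrow> fun_subspace V \<Longrightarrow> p (\<lambda>x. 0) = 0"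
  using sublinear_on_scale[of V p "\<lambda>x. 0" 0] by (simp add: fun_subspace_zero)

lemma sublinear_on_uminus_sum:
  assumes p: "sublinear_on V p" and V: "fun_subspace V" and f: "f \<in> V"
  shows "0 \<le> p f + p (\<lambda>x. - f x)"
  using sublinear_on_add[OF p f fun_subspace_uminus[OF V f]] sublinear_on_zero[OF p V] by simp

lemma sublinear_on_cong:
  "sublinear_on V p \<Longrightarrow> fun_subspace V \<Longrightarrow> (\<And>f. f \<in> V \<Longrightarrow> p' f = p f) \<Longrightarrow> sublinear_on V p'"
  unfolding sublinear_on_def by (simp add: fun_subspace_add fun_subspace_scale)

lemma seminorm_on_zero: "seminorm_on V N \<Longrightarrow> fun_subspace V \<Longrightarrow> N (\<lambda>x. 0) = 0"
  unfolding seminorm_on_def using sublinear_on_zero by blast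

lemma seminorm_on_nonneg:
  assumes "seminorm_on V N" "fun_subspace V" "f \<in> V"
  shows "0 \<le> N f"
  using sublinear_on_uminus_sum[of V N f] assms unfolding seminorm_on_def by simp

lemma cINF_mult_pos:
  fixes f :: "'a \<Rightarrow> real"
  assumes A: "A \<noteq> {}" and bdd: "bdd_below (f ` A)" and c: "c > 0"
  shows "(INF x\<in>A. c * f x) = c * (INF x\<in>A. f x)"
proof (rule antisym)
  obtain m where m: "\<And>x. x \<in> A \<Longrightarrow> m \<le> f x" using bdd unfolding bdd_below_def by auto
  have "bdd_below ((\<lambda>x. c * f x) ` A)"
    using m c unfolding bdd_below_def by (auto intro!: exI[of _ "c * m"])
  then have "(INF x\<in>A. c * f x) / c \<le> f x" if "x \<in> A" for x
    using cINF_lower[OF _ that] c by (simp add: pos_divide_le_eq mult.commute)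
  then have "(INF x\<in>A. c * f x) / c \<le> (INF x\<in>A. f x)" by (rule cINF_greatest[OF A])
  then show "(INF x\<in>A. c * f x) \<le> c * (INF x\<in>A. f x)" using c by (simp add: pos_divide_le_eq mult.commute)
  show "c * (INF x\<in>A. f x) \<le> (INF x\<in>A. c * f x)"
    using cINF_lower[OF bdd] c by (intro cINF_greatest[OF A]) (simp add: mult_left_mono)
qed

lemma sublinear_on_INF_chain:
  assumes V: "fun_subspace V" and P: "P \<noteq> {}" "\<forall>p\<in>P. sublinear_on V p"
    and chain: "\<forall>p1\<in>P. \<forall>p2\<in>P. (\<forall>h\<in>V. p1 h \<le> p2 h) \<or> (\<forall>h\<in>V. p2 h \<le> p1 h)"
    and bdd: "\<forall>h\<in>V. bdd_below ((\<lambda>p. p h) ` P)"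
  shows "sublinear_on V (\<lambda>h. INF p\<in>P. p h)" (is "sublinear_on V ?u")
  unfolding sublinear_on_def
proof (intro conjI ballI allI impI)
  have greatest: "z \<le> ?u h" if "\<And>p. p \<in> P \<Longrightarrow> z \<le> p h" for h z
    using P(1) that by (rule cINF_greatest)
  fix f g assume f: "f \<in> V" and g: "g \<in> V"
  have fg: "(\<lambda>x. f x + g x) \<in> V" using fun_subspace_add[OF V f g] .
  \<comment> \<open>for two members of the chain, the smaller one bounds both summands\<close>
  have "?u (\<lambda>x. f x + g x) \<le> p1 f + p2 g" if "p1 \<in> P" "p2 \<in> P" for p1 p2
  proof -
    have sum: "?u (\<lambda>x. f x + g x) \<le> p f + p g" if "p \<in> P" for p
      using cINF_lower[OF bspec[OF bdd fg] that] sublinear_on_add[of V p f g] P(2) that f g by fastforce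
    from chain that consider "\<forall>h\<in>V. p1 h \<le> p2 h" | "\<forall>h\<in>V. p2 h \<le> p1 h" by blast
    then show ?thesis
    proof cases
      case 1 then show ?thesis using sum[of p1] that g by fastforce
    next
      case 2 then show ?thesis using sum[of p2] that f by fastforce
    qed
  qed
  then have "?u (\<lambda>x. f x + g x) - p2 g \<le> ?u f" if "p2 \<in> P" for p2
    using that by (intro greatest) (simp add: algebra_simps)
  then have "?u (\<lambda>x. f x + g x) - ?u f \<le> ?u g"
    by (intro greatest) (simp add: algebra_simps)
  then show "?u (\<lambda>x. f x + g x) \<le> ?u f + ?u g" by simp
next
  fix f and c :: real assume f: "f \<in> V" and c: "0 \<le> c"
  have hom: "p (\<lambda>x. c * f x) = c * p f" if "p \<in> P" for p
    using sublinear_on_scale[of V p f c] P(2) that f c by blast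
  then have "?u (\<lambda>x. c * f x) = (INF p\<in>P. c * p f)" by (intro INF_cong) simp_all
  also have "\<dots> = c * ?u f"
  proof (cases "c = 0")
    case False
    then show ?thesis using cINF_mult_pos[OF P(1) bspec[OF bdd f]] c by simp
  qed (use P(1) in simp)
  finally show "?u (\<lambda>x. c * f x) = c * ?u f" .
qed

text \<open>
  For \<open>r \<le> p\<close> on a convex set \<open>D\<close>, \<open>shift_inf p D r\<close> is a sublinear minorant of \<open>p\<close> that is
  at most \<open>-r\<close> on \<open>-D\<close>; any linear functional below it separates \<open>D\<close> at level \<open>r\<close>.
\<close>

definition shift_inf :: "(('b \<Rightarrow> real) \<Rightarrow> real) \<Rightarrow> ('b \<Rightarrow> real) set \<Rightarrow> real \<Rightarrow> ('b \<Rightarrow> real) \<Rightarrow> real"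
  where "shift_inf p D r h = Inf {p (\<lambda>x. h x + t * d x) - t * r | t d. 0 \<le> t \<and> d \<in> D}"

context
  fixes V :: "('b \<Rightarrow> real) set" and p :: "('b \<Rightarrow> real) \<Rightarrow> real" and D and r :: real
  assumes V: "fun_subspace V" and p: "sublinear_on V p"
    and D: "D \<subseteq> V" "fun_convex D" "D \<noteq> {}" and r: "\<forall>d\<in>D. r \<le> p d"
begin

lemma shift_inf_le:
  assumes h: "h \<in> V" and t: "0 \<le> t" and d: "d \<in> D"
  shows "shift_inf p D r h \<le> p (\<lambda>x. h x + t * d x) - t * r"
proof -
  have "- p (\<lambda>x. - h x) \<le> p (\<lambda>x. h x + t * d x) - t * r" if t: "0 \<le> t" and d: "d \<in> D" for t d
  proof -
    have "p (\<lambda>x. t * d x) \<le> p (\<lambda>x. h x + t * d x) + p (\<lambda>x. - h x)"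
      using sublinear_on_add[OF p fun_subspace_add_scale[OF V h] fun_subspace_uminus[OF V h]] D(1) d
      by auto
    moreover have "t * r \<le> p (\<lambda>x. t * d x)"
      using sublinear_on_scale[OF p _ t, of d] r d D(1) t by (simp add: mult_left_mono subset_iff)
    ultimately show ?thesis by linarith
  qed
  then have "bdd_below {p (\<lambda>x. h x + t * d x) - t * r | t d. 0 \<le> t \<and> d \<in> D}"
    unfolding bdd_below_def by blast
  then show ?thesis unfolding shift_inf_def using t d by (intro cInf_lower) auto
qed

lemma shift_inf_greatest:
  assumes "\<And>t d. 0 \<le> t \<Longrightarrow> d \<in> D \<Longrightarrow> z \<le> p (\<lambda>x. h x + t * d x) - t * r"
  shows "z \<le> shift_inf p D r h"
proof -
  obtain d0 where "d0 \<in> D" using D(3) by blast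
  then have "{p (\<lambda>x. h x + t * d x) - t * r | t d. 0 \<le> t \<and> d \<in> D} \<noteq> {}" by blast
  then show ?thesis unfolding shift_inf_def using assms by (intro cInf_greatest) auto
qed

lemma shift_inf_le_self: "h \<in> V \<Longrightarrow> shift_inf p D r h \<le> p h"
  using shift_inf_le[of h 0] D(3) by auto

lemma shift_inf_uminus: "d \<in> D \<Longrightarrow> shift_inf p D r (\<lambda>x. - d x) \<le> - r"
  using shift_inf_le[OF fun_subspace_uminus[OF V], of d 1 d] sublinear_on_zero[OF p V] D(1) by auto

lemma shift_inf_add:
  assumes h1: "h1 \<in> V" and h2: "h2 \<in> V"
  shows "shift_inf p D r (\<lambda>x. h1 x + h2 x) \<le> shift_inf p D r h1 + shift_inf p D r h2"
proof -
  have h12: "(\<lambda>x. h1 x + h2 x) \<in> V" using fun_subspace_add[OF V h1 h2] .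
  have split: "shift_inf p D r (\<lambda>x. h1 x + h2 x)
      \<le> (p (\<lambda>x. h1 x + t1 * d1 x) - t1 * r) + (p (\<lambda>x. h2 x + t2 * d2 x) - t2 * r)"
    if t1: "0 \<le> t1" and d1: "d1 \<in> D" and t2: "0 \<le> t2" and d2: "d2 \<in> D" for t1 d1 t2 d2
  proof (cases "t1 + t2 = 0")
    case True
    then have "t1 = 0" "t2 = 0" using t1 t2 by auto
    then show ?thesis using shift_inf_le_self[OF h12] sublinear_on_add[OF p h1 h2] by simp
  next
    case False
    define t where "t = t1 + t2"
    have t: "t > 0" using False t1 t2 unfolding t_def by simp
    \<comment> \<open>\<open>t1 d1 + t2 d2 = t d\<close> for a convex combination \<open>d\<close> of \<open>d1\<close> and \<open>d2\<close>\<close>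
    define d where "d = (\<lambda>x. (t1 / t) * d1 x + (1 - t1 / t) * d2 x)"
    have "t1 / t \<le> 1" using t2 t unfolding t_def by simp
    then have "d \<in> D"
      unfolding d_def using t1 t by (intro fun_convexD[OF D(2) d1 d2]) auto
    moreover have "(\<lambda>x. (h1 x + h2 x) + t * d x) = (\<lambda>x. (h1 x + t1 * d1 x) + (h2 x + t2 * d2 x))"
    proof
      fix x
      have "t * d x = t1 * d1 x + (t - t1) * d2 x"
        using t unfolding d_def by (simp add: field_simps)
      then show "(h1 x + h2 x) + t * d x = (h1 x + t1 * d1 x) + (h2 x + t2 * d2 x)"
        unfolding t_def by simp
    qed
    ultimately have "shift_inf p D r (\<lambda>x. h1 x + h2 x)
        \<le> p (\<lambda>x. (h1 x + t1 * d1 x) + (h2 x + t2 * d2 x)) - t * r"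
      using shift_inf_le[OF h12 _ \<open>d \<in> D\<close>, of t] t by simp
    also have "\<dots> \<le> p (\<lambda>x. h1 x + t1 * d1 x) + p (\<lambda>x. h2 x + t2 * d2 x) - t * r"
      using sublinear_on_add[OF p fun_subspace_add_scale[OF V h1, of d1 t1]
          fun_subspace_add_scale[OF V h2, of d2 t2]] d1 d2 D(1)
      by auto
    finally show ?thesis unfolding t_def by (simp add: algebra_simps)
  qed
  have "shift_inf p D r (\<lambda>x. h1 x + h2 x) - (p (\<lambda>x. h2 x + t2 * d2 x) - t2 * r) \<le> shift_inf p D r h1"
    if "0 \<le> t2" "d2 \<in> D" for t2 d2
    using split[OF _ _ that] by (intro shift_inf_greatest) force
  then have "shift_inf p D r (\<lambda>x. h1 x + h2 x) - shift_inf p D r h1 \<le> shift_inf p D r h2"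
    by (intro shift_inf_greatest) force
  then show ?thesis by simp
qed

lemma shift_inf_scale:
  assumes h: "h \<in> V" and c: "0 \<le> c"
  shows "shift_inf p D r (\<lambda>x. c * h x) = c * shift_inf p D r h"
proof (cases "c = 0")
  case True
  obtain d0 where d0: "d0 \<in> D" using D(3) by blast
  have "shift_inf p D r (\<lambda>x. c * h x) \<le> 0"
    using shift_inf_le_self[OF fun_subspace_scale[OF V h, of c]] True sublinear_on_zero[OF p V] by simp
  moreover have "0 \<le> shift_inf p D r (\<lambda>x. c * h x)"
  proof (rule shift_inf_greatest)
    fix t :: real and d assume t: "0 \<le> t" and d: "d \<in> D"
    have "t * r \<le> t * p d" using r d t by (simp add: mult_left_mono)
    also have "\<dots> = p (\<lambda>x. t * d x)" using sublinear_on_scale[OF p _ t, of d] d D(1) by auto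
    finally show "0 \<le> p (\<lambda>x. c * h x + t * d x) - t * r" using True by simp
  qed
  ultimately show ?thesis using True by simp
next
  case False
  then have c: "c > 0" using c by simp
  have "shift_inf p D r (\<lambda>x. c * h x) / c \<le> shift_inf p D r h"
  proof (rule shift_inf_greatest)
    fix t :: real and d assume t: "0 \<le> t" and d: "d \<in> D"
    have "shift_inf p D r (\<lambda>x. c * h x) \<le> p (\<lambda>x. c * (h x + t * d x)) - (c * t) * r"
      using shift_inf_le[OF fun_subspace_scale[OF V h] _ d, of "c * t"] t c by (simp add: algebra_simps)
    also have "\<dots> = c * (p (\<lambda>x. h x + t * d x) - t * r)"
      using sublinear_on_scale[OF p fun_subspace_add_scale[OF V h]] c d D(1) by (auto simp: algebra_simps)
    finally show "shift_inf p D r (\<lambda>x. c * h x) / c \<le> p (\<lambda>x. h x + t * d x) - t * r"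
      using c by (simp add: divide_simps mult.commute)
  qed
  moreover have "c * shift_inf p D r h \<le> shift_inf p D r (\<lambda>x. c * h x)"
  proof (rule shift_inf_greatest)
    fix t :: real and d assume t: "0 \<le> t" and d: "d \<in> D"
    have "c * shift_inf p D r h \<le> c * (p (\<lambda>x. h x + (t / c) * d x) - (t / c) * r)"
      using shift_inf_le[OF h _ d, of "t / c"] t c by (intro mult_left_mono) auto
    also have "\<dots> = p (\<lambda>x. c * (h x + (t / c) * d x)) - t * r"
      using sublinear_on_scale[OF p fun_subspace_add_scale[OF V h], of d c "t / c"] c d D(1)
      by (auto simp: right_diff_distrib)
    also have "(\<lambda>x. c * (h x + (t / c) * d x)) = (\<lambda>x. c * h x + t * d x)"
      using c by (simp add: algebra_simps)
    finally show "c * shift_inf p D r h \<le> p (\<lambda>x. c * h x + t * d x) - t * r" .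
  qed
  ultimately show ?thesis using c by (simp add: divide_simps mult.commute)
qed

lemma sublinear_on_shift_inf: "sublinear_on V (shift_inf p D r)"
  unfolding sublinear_on_def using shift_inf_add shift_inf_scale by blast

end

lemma minimal_sublinear_on_linear:
  assumes V: "fun_subspace V" and m: "sublinear_on V m"
    and minimal: "\<And>p. sublinear_on V p \<Longrightarrow> \<forall>h\<in>V. p h \<le> m h \<Longrightarrow> \<forall>h\<in>V. p h = m h"
  shows "linear_on V m"
proof -
  have uminus: "m (\<lambda>x. - y x) = - m y" if y: "y \<in> V" for y
  proof -
    \<comment> \<open>shifting \<open>m\<close> along \<open>y\<close> gives a smaller sublinear functional, hence \<open>m\<close> itself\<close>
    have D: "{y} \<subseteq> V" "fun_convex {y}" "{y} \<noteq> {}" "\<forall>d\<in>{y}. m y \<le> m d"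
      using y unfolding fun_convex_def by (auto simp: algebra_simps)
    have "\<forall>h\<in>V. shift_inf m {y} (m y) h = m h"
      using minimal[OF sublinear_on_shift_inf[OF V m D]] shift_inf_le_self[OF V m D] by blast
    then have "m (\<lambda>x. - y x) \<le> - m y"
      using shift_inf_uminus[OF V m D] fun_subspace_uminus[OF V y] by force
    then show ?thesis using sublinear_on_uminus_sum[OF m V y] by linarith
  qed
  have add: "m (\<lambda>x. f x + g x) = m f + m g" if f: "f \<in> V" and g: "g \<in> V" for f g
  proof -
    have "m (\<lambda>x. - f x + - g x) \<le> m (\<lambda>x. - f x) + m (\<lambda>x. - g x)"
      using sublinear_on_add[OF m fun_subspace_uminus[OF V f] fun_subspace_uminus[OF V g]] .
    then have "- m (\<lambda>x. f x + g x) \<le> - m f - m g"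
      using uminus[OF fun_subspace_add[OF V f g]] uminus[OF f] uminus[OF g] by simp
    then show ?thesis using sublinear_on_add[OF m f g] by linarith
  qed
  have scale: "m (\<lambda>x. c * f x) = c * m f" if f: "f \<in> V" for f c
  proof (cases "c \<ge> 0")
    case True then show ?thesis using sublinear_on_scale[OF m f] by simp
  next
    case False
    then have "m (\<lambda>x. - ((- c) * f x)) = - m (\<lambda>x. (- c) * f x)"
      using uminus[OF fun_subspace_scale[OF V f]] by simp
    then show ?thesis using sublinear_on_scale[OF m f, of "- c"] False by simp
  qed
  show ?thesis
    unfolding linear_on_def
    using add fun_subspace_scale[OF V] scale by simp
qed

text \<open>Vanishing outside \<open>V\<close> makes the pointwise order on \<open>V\<close> antisymmetric, as Zorn's lemma needs.\<close>

definition sublinear_minorants :: "('b \<Rightarrow> real) set \<Rightarrow> (('b \<Rightarrow> real) \<Rightarrow> real) \<Rightarrow> (('b \<Rightarrow> real) \<Rightarrow> real) set"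
  where "sublinear_minorants V q = {p. sublinear_on V p \<and> (\<forall>h\<in>V. p h \<le> q h) \<and> (\<forall>h. h \<notin> V \<longrightarrow> p h = 0)}"

lemma restrict_in_sublinear_minorants:
  assumes "fun_subspace V" "sublinear_on V p" "\<forall>h\<in>V. p h \<le> q h"
  shows "(\<lambda>h. if h \<in> V then p h else 0) \<in> sublinear_minorants V q"
  using assms sublinear_on_cong[OF assms(2,1), of "\<lambda>h. if h \<in> V then p h else 0"]
  unfolding sublinear_minorants_def by auto

lemma sublinear_minorants_chain_bound:
  assumes V: "fun_subspace V" and q: "sublinear_on V q" and C: "C \<subseteq> sublinear_minorants V q"
    and chain: "\<forall>p1\<in>C. \<forall>p2\<in>C. (\<forall>h\<in>V. p1 h \<le> p2 h) \<or> (\<forall>h\<in>V. p2 h \<le> p1 h)"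
  shows "\<exists>u\<in>sublinear_minorants V q. \<forall>p\<in>C. \<forall>h\<in>V. u h \<le> p h"
proof -
  \<comment> \<open>\<open>q\<close> is added to the chain so that it is nonempty\<close>
  define P where "P = insert q C"
  have "P \<noteq> {}" "\<forall>p\<in>P. sublinear_on V p" using q C unfolding P_def sublinear_minorants_def by auto
  moreover have "\<forall>p1\<in>P. \<forall>p2\<in>P. (\<forall>h\<in>V. p1 h \<le> p2 h) \<or> (\<forall>h\<in>V. p2 h \<le> p1 h)"
    using chain C unfolding P_def sublinear_minorants_def by blast
  moreover have bdd: "\<forall>h\<in>V. bdd_below ((\<lambda>p. p h) ` P)"
  proof
    fix h assume h: "h \<in> V"
    have "- q (\<lambda>x. - h x) \<le> p h" if "p \<in> P" for p
    proof -
      have "sublinear_on V p" "p (\<lambda>x. - h x) \<le> q (\<lambda>x. - h x)"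
        using that q C fun_subspace_uminus[OF V h] unfolding P_def sublinear_minorants_def by auto
      then show ?thesis using sublinear_on_uminus_sum[OF _ V h] by force
    qed
    then show "bdd_below ((\<lambda>p. p h) ` P)" unfolding bdd_below_def by blast
  qed
  ultimately have sub: "sublinear_on V (\<lambda>h. INF p\<in>P. p h)" by (rule sublinear_on_INF_chain[OF V])
  have INF_le: "(INF p\<in>P. p h) \<le> p h" if "p \<in> P" "h \<in> V" for p h
    using bdd that by (auto intro: cINF_lower)
  define u where "u h = (if h \<in> V then INF p\<in>P. p h else 0)" for h
  have "u \<in> sublinear_minorants V q"
    unfolding u_def using INF_le[of q]
    by (intro restrict_in_sublinear_minorants[OF V sub]) (simp add: P_def)
  moreover have "\<forall>p\<in>C. \<forall>h\<in>V. u h \<le> p h" using INF_le unfolding u_def P_def by simp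
  ultimately show ?thesis by blast
qed

theorem hahn_banach_sublinear:
  fixes V :: "('b \<Rightarrow> real) set"
  assumes V: "fun_subspace V" and q: "sublinear_on V q"
  shows "\<exists>\<phi>. linear_on V \<phi> \<and> (\<forall>h\<in>V. \<phi> h \<le> q h)"
proof -
  define A where "A = sublinear_minorants V q"
  define below where "below p1 p2 \<longleftrightarrow> (\<forall>h\<in>V. p2 h \<le> p1 h)" for p1 p2 :: "('b \<Rightarrow> real) \<Rightarrow> real"
  have partial_order: "partial_order_on A (relation_of below A)"
  proof (rule partial_order_on_relation_ofI)
    fix p1 p2 assume A: "p1 \<in> A" "p2 \<in> A" and "below p1 p2" "below p2 p1"
    then have "p1 h = p2 h" if "h \<in> V" for h
      using that unfolding below_def by (meson antisym)
    moreover have "p1 h = p2 h" if "h \<notin> V" for h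
      using that A unfolding A_def sublinear_minorants_def by simp
    ultimately show "p1 = p2" by blast
  next
    show "below p p" for p unfolding below_def by simp
    show "below p1 p3" if "below p1 p2" "below p2 p3" for p1 p2 p3
      using that unfolding below_def by (meson order_trans)
  qed
  have chains: "\<exists>u\<in>A. \<forall>p\<in>C. below p u" if C: "C \<in> Chains (relation_of below A)" for C
  proof -
    have "below p1 p2 \<or> below p2 p1" if "p1 \<in> C" "p2 \<in> C" for p1 p2
      using C that unfolding Chains_def relation_of_def by blast
    then have "\<forall>p1\<in>C. \<forall>p2\<in>C. (\<forall>h\<in>V. p1 h \<le> p2 h) \<or> (\<forall>h\<in>V. p2 h \<le> p1 h)"
      unfolding below_def by blast
    from sublinear_minorants_chain_bound[OF V q Chains_relation_of[OF C, unfolded A_def] this]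
    show ?thesis unfolding A_def below_def by blast
  qed
  obtain m where m: "m \<in> A" and minimal: "\<And>p. p \<in> A \<Longrightarrow> below m p \<Longrightarrow> p = m"
    using predicate_Zorn[OF partial_order chains] by blast
  have "linear_on V m"
  proof (rule minimal_sublinear_on_linear[OF V])
    show "sublinear_on V m" using m unfolding A_def sublinear_minorants_def by blast
    fix p assume p: "sublinear_on V p" "\<forall>h\<in>V. p h \<le> m h"
    then have "\<forall>h\<in>V. p h \<le> q h" using m unfolding A_def sublinear_minorants_def by force
    then have "(\<lambda>h. if h \<in> V then p h else 0) \<in> A"
      unfolding A_def by (rule restrict_in_sublinear_minorants[OF V p(1)])
    moreover have "below m (\<lambda>h. if h \<in> V then p h else 0)" using p(2) unfolding below_def by simp
    ultimately have "(\<lambda>h. if h \<in> V then p h else 0) = m" by (rule minimal)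
    then show "\<forall>h\<in>V. p h = m h" by (auto dest: fun_cong)
  qed
  then show ?thesis using m unfolding A_def sublinear_minorants_def by blast
qed

section \<open>Banach limits\<close>

definition upper_limit :: "(nat \<Rightarrow> real) \<Rightarrow> real" where
  "upper_limit a = Inf {c. eventually (\<lambda>n. a n \<le> c) sequentially}"

lemma upper_limit_le:
  assumes "Bseq a" "eventually (\<lambda>n. a n \<le> c) sequentially"
  shows "upper_limit a \<le> c"
proof -
  obtain K where K: "\<And>n. \<bar>a n\<bar> \<le> K" using assms(1) unfolding Bseq_def by auto
  have "- K \<le> c'" if ev: "eventually (\<lambda>n. a n \<le> c') sequentially" for c'
  proof -
    obtain n where "a n \<le> c'" using ev unfolding eventually_sequentially by auto
    then show ?thesis using K[of n] by linarith
  qed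
  then have "bdd_below {c. eventually (\<lambda>n. a n \<le> c) sequentially}"
    unfolding bdd_below_def by blast
  then show ?thesis unfolding upper_limit_def using assms(2) by (intro cInf_lower) auto
qed

lemma upper_limit_greatest:
  assumes "Bseq a" "\<And>c. eventually (\<lambda>n. a n \<le> c) sequentially \<Longrightarrow> z \<le> c"
  shows "z \<le> upper_limit a"
proof -
  obtain K where K: "\<And>n. \<bar>a n\<bar> \<le> K" using assms(1) unfolding Bseq_def by auto
  then have "K \<in> {c. eventually (\<lambda>n. a n \<le> c) sequentially}" by (simp add: abs_le_iff)
  then show ?thesis unfolding upper_limit_def using assms(2) by (intro cInf_greatest) auto
qed

lemma fun_subspace_Bseq: "fun_subspace (Collect Bseq)"
  unfolding fun_subspace_def
proof (intro conjI ballI allI)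
  fix f g :: "nat \<Rightarrow> real" and a b assume "f \<in> Collect Bseq" "g \<in> Collect Bseq"
  then obtain K1 K2 where "\<And>n. \<bar>f n\<bar> \<le> K1" "\<And>n. \<bar>g n\<bar> \<le> K2" unfolding Bseq_def by auto
  then have "\<bar>a * f n + b * g n\<bar> \<le> \<bar>a\<bar> * K1 + \<bar>b\<bar> * K2" for n
    by (intro order_trans[OF abs_triangle_ineq] add_mono) (simp_all add: abs_mult mult_left_mono)
  then show "(\<lambda>n. a * f n + b * g n) \<in> Collect Bseq"
    by (auto intro!: BseqI'[where K = "\<bar>a\<bar> * K1 + \<bar>b\<bar> * K2"])
qed simp

lemma sublinear_on_upper_limit: "sublinear_on (Collect Bseq) upper_limit"
  unfolding sublinear_on_def
proof (intro conjI ballI allI impI)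
  fix a b :: "nat \<Rightarrow> real" assume a: "a \<in> Collect Bseq" and b: "b \<in> Collect Bseq"
  have ab: "Bseq (\<lambda>n. a n + b n)" using fun_subspace_add[OF fun_subspace_Bseq a b] by simp
  have "upper_limit (\<lambda>n. a n + b n) - c2 \<le> upper_limit a"
    if "eventually (\<lambda>n. b n \<le> c2) sequentially" for c2
    using a that
    by (intro upper_limit_greatest)
       (auto intro!: upper_limit_le[OF ab] elim: eventually_elim2 simp: algebra_simps)
  then have "upper_limit (\<lambda>n. a n + b n) - upper_limit a \<le> upper_limit b"
    using b by (intro upper_limit_greatest) (auto simp: algebra_simps)
  then show "upper_limit (\<lambda>n. a n + b n) \<le> upper_limit a + upper_limit b" by simp
next
  fix a :: "nat \<Rightarrow> real" and c :: real assume a: "a \<in> Collect Bseq" and c: "0 \<le> c"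
  have ca: "Bseq (\<lambda>n. c * a n)" using fun_subspace_scale[OF fun_subspace_Bseq a] by simp
  show "upper_limit (\<lambda>n. c * a n) = c * upper_limit a"
  proof (cases "c = 0")
    case True
    have "0 \<le> c'" if "eventually (\<lambda>n. c * a n \<le> c') sequentially" for c'
      using that True unfolding eventually_sequentially by auto
    then show ?thesis
      using upper_limit_le[OF ca, of 0] upper_limit_greatest[OF ca, of 0] True by simp
  next
    case False
    then have c: "c > 0" using c by simp
    have "upper_limit (\<lambda>n. c * a n) / c \<le> upper_limit a"
      using a c
      by (intro upper_limit_greatest)
         (auto intro!: upper_limit_le[OF ca] elim!: eventually_mono simp: divide_simps mult.commute)
    moreover have "c * upper_limit a \<le> upper_limit (\<lambda>n. c * a n)"
    proof (rule upper_limit_greatest[OF ca])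
      fix d assume "eventually (\<lambda>n. c * a n \<le> d) sequentially"
      then have "eventually (\<lambda>n. a n \<le> d / c) sequentially"
        by (rule eventually_mono) (use c in \<open>simp add: field_simps mult.commute\<close>)
      then have "upper_limit a \<le> d / c" using upper_limit_le a by simp
      then show "c * upper_limit a \<le> d" using c by (simp add: field_simps mult.commute)
    qed
    ultimately show ?thesis using c by (simp add: divide_simps mult.commute)
  qed
qed

theorem banach_limit_exists:
  "\<exists>L. linear_on (Collect Bseq) L
     \<and> (\<forall>a c. Bseq a \<longrightarrow> eventually (\<lambda>n. a n \<le> c) sequentially \<longrightarrow> L a \<le> c)
     \<and> (\<forall>a c. Bseq a \<longrightarrow> eventually (\<lambda>n. c \<le> a n) sequentially \<longrightarrow> c \<le> L a)"
proof -
  obtain L where L: "linear_on (Collect Bseq) L" "\<forall>a\<in>Collect Bseq. L a \<le> upper_limit a"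
    using hahn_banach_sublinear[OF fun_subspace_Bseq sublinear_on_upper_limit] by blast
  have upper: "L a \<le> c" if "Bseq a" "eventually (\<lambda>n. a n \<le> c) sequentially" for a c
    using L(2) upper_limit_le[OF that] that(1) by force
  moreover have "c \<le> L a" if "Bseq a" "eventually (\<lambda>n. c \<le> a n) sequentially" for a c
  proof -
    have "L (\<lambda>n. - a n) \<le> - c"
      using that by (intro upper) (auto simp: Bseq_minus_iff elim: eventually_mono)
    then show ?thesis using linear_on_uminus[OF L(1)] that(1) by simp
  qed
  ultimately show ?thesis using L(1) by blast
qed

section \<open>Dual and bidual of a seminormed space of functions\<close>

lemma dual_space_linear: "\<phi> \<in> dual_space V N \<Longrightarrow> linear_on V \<phi>"
  unfolding dual_space_def linear_on_def by blast

lemma dual_norm_upper: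
  assumes V: "fun_subspace V" and N: "seminorm_on V N" and \<phi>: "\<phi> \<in> dual_space V N"
    and f: "f \<in> V" "N f \<le> 1"
  shows "\<bar>\<phi> f\<bar> \<le> dual_norm V N \<phi>"
proof -
  obtain K where K: "\<And>g. g \<in> V \<Longrightarrow> \<bar>\<phi> g\<bar> \<le> K * N g" using \<phi> unfolding dual_space_def by blast
  have "\<bar>\<phi> g\<bar> \<le> \<bar>K\<bar>" if "g \<in> V" "N g \<le> 1" for g
  proof -
    have "K * N g \<le> \<bar>K\<bar> * N g" using seminorm_on_nonneg[OF N V that(1)] by (intro mult_right_mono) auto
    also have "\<dots> \<le> \<bar>K\<bar>" using that(2) mult_left_mono[OF that(2), of "\<bar>K\<bar>"] by simp
    finally show ?thesis using K[OF that(1)] by simp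
  qed
  then have "bdd_above ((\<lambda>g. \<bar>\<phi> g\<bar>) ` {g \<in> V. N g \<le> 1})" unfolding bdd_above_def by blast
  then show ?thesis unfolding dual_norm_def using f by (intro cSup_upper) auto
qed

lemma dual_norm_nonneg:
  assumes V: "fun_subspace V" and N: "seminorm_on V N" and \<phi>: "\<phi> \<in> dual_space V N"
  shows "0 \<le> dual_norm V N \<phi>"
proof -
  have "N (\<lambda>x. 0) = 0" using seminorm_on_zero[OF N V] .
  then have "\<bar>\<phi> (\<lambda>x. 0)\<bar> \<le> dual_norm V N \<phi>"
    using dual_norm_upper[OF V N \<phi> fun_subspace_zero[OF V]] by simp
  then show ?thesis by (meson abs_ge_zero order_trans)
qed

lemma dual_space_bound:
  assumes V: "fun_subspace V" and N: "seminorm_on V N" and \<phi>: "\<phi> \<in> dual_space V N" and h: "h \<in> V"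
  shows "\<bar>\<phi> h\<bar> \<le> dual_norm V N \<phi> * N h"
proof (cases "N h = 0")
  case True
  obtain K where "\<And>g. g \<in> V \<Longrightarrow> \<bar>\<phi> g\<bar> \<le> K * N g" using \<phi> unfolding dual_space_def by blast
  then show ?thesis using h True by fastforce
next
  case False
  then have pos: "N h > 0" using seminorm_on_nonneg[OF N V h] by simp
  have sub: "sublinear_on V N" using N unfolding seminorm_on_def by blast
  have "N (\<lambda>x. (1 / N h) * h x) = 1" using sublinear_on_scale[OF sub h, of "1 / N h"] pos by simp
  then have "\<bar>\<phi> (\<lambda>x. (1 / N h) * h x)\<bar> \<le> dual_norm V N \<phi>"
    using dual_norm_upper[OF V N \<phi> fun_subspace_scale[OF V h, of "1 / N h"]] by simp
  then have "\<bar>\<phi> h\<bar> / N h \<le> dual_norm V N \<phi>"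
    using linear_on_scale[OF dual_space_linear[OF \<phi>] h, of "1 / N h"] pos by (simp add: abs_divide)
  then show ?thesis using pos by (simp add: divide_simps)
qed

lemma dual_space_if_le:
  assumes V: "fun_subspace V" and N: "seminorm_on V N"
    and \<phi>: "linear_on V \<phi>" "\<forall>h\<in>V. \<phi> h \<le> N h"
  shows "\<phi> \<in> dual_space V N" "dual_norm V N \<phi> \<le> 1"
proof -
  have abs_le: "\<bar>\<phi> h\<bar> \<le> N h" if h: "h \<in> V" for h
  proof -
    have "- \<phi> h \<le> N h"
      using \<phi>(2) fun_subspace_uminus[OF V h] linear_on_uminus[OF \<phi>(1) h] N h
      unfolding seminorm_on_def by force
    then show ?thesis using \<phi>(2) h by (auto simp: abs_le_iff)
  qed
  then show "\<phi> \<in> dual_space V N"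
    using \<phi>(1) unfolding dual_space_def linear_on_def by (intro CollectI conjI exI[of _ 1]) auto
  have "N (\<lambda>x. 0) = 0" using seminorm_on_zero[OF N V] .
  then show "dual_norm V N \<phi> \<le> 1"
    unfolding dual_norm_def using fun_subspace_zero[OF V] abs_le
    by (intro cSup_least) (auto intro: order_trans)
qed

lemma seminorm_separation:
  assumes V: "fun_subspace V" and N: "seminorm_on V N"
    and D: "D \<subseteq> V" "fun_convex D" "D \<noteq> {}" and far: "\<forall>d\<in>D. r \<le> N d"
  shows "\<exists>\<phi>\<in>dual_space V N. dual_norm V N \<phi> \<le> 1 \<and> (\<forall>d\<in>D. r \<le> \<phi> d)"
proof -
  have sub: "sublinear_on V N" using N unfolding seminorm_on_def by blast
  obtain \<phi> where \<phi>: "linear_on V \<phi>" "\<forall>h\<in>V. \<phi> h \<le> shift_inf N D r h"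
    using hahn_banach_sublinear[OF V sublinear_on_shift_inf[OF V sub D far]] by blast
  have "\<forall>h\<in>V. \<phi> h \<le> N h" using \<phi>(2) shift_inf_le_self[OF V sub D far] by (meson order_trans)
  note dual = dual_space_if_le[OF V N \<phi>(1) this]
  have "r \<le> \<phi> d" if d: "d \<in> D" for d
  proof -
    have "\<phi> (\<lambda>x. - d x) \<le> - r"
      using \<phi>(2) shift_inf_uminus[OF V sub D far d] fun_subspace_uminus[OF V] d D(1) by force
    then show ?thesis using linear_on_uminus[OF \<phi>(1)] d D(1) by force
  qed
  then show ?thesis using dual by blast
qed

lemma bidual_weak_cluster_point:
  assumes V: "fun_subspace V" and N: "seminorm_on V N"
    and xs: "\<And>n. xs n \<in> V" and bounded: "\<And>n. N (xs n) \<le> B"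
  shows "\<exists>\<Psi>\<in>bidual_space V N. \<forall>\<phi>\<in>dual_space V N. \<forall>c.
           eventually (\<lambda>n. c \<le> \<phi> (xs n)) sequentially \<longrightarrow> c \<le> \<Psi> \<phi>"
proof -
  obtain L where L: "linear_on (Collect Bseq) L"
    and upper: "\<And>a c. Bseq a \<Longrightarrow> eventually (\<lambda>n. a n \<le> c) sequentially \<Longrightarrow> L a \<le> c"
    and lower: "\<And>a c. Bseq a \<Longrightarrow> eventually (\<lambda>n. c \<le> a n) sequentially \<Longrightarrow> c \<le> L a"
    using banach_limit_exists by blast
  have seq_bound: "\<bar>\<phi> (xs n)\<bar> \<le> dual_norm V N \<phi> * B" if "\<phi> \<in> dual_space V N" for \<phi> n
    using dual_space_bound[OF V N that xs] bounded[of n] dual_norm_nonneg[OF V N that]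
    by (meson mult_left_mono order_trans)
  have seq_Bseq: "Bseq (\<lambda>n. \<phi> (xs n))" if "\<phi> \<in> dual_space V N" for \<phi>
    by (rule BseqI'[where K = "dual_norm V N \<phi> * B"]) (simp add: seq_bound[OF that])
  define \<Psi> where "\<Psi> \<phi> = L (\<lambda>n. \<phi> (xs n))" for \<phi> :: "('a \<Rightarrow> real) \<Rightarrow> real"
  have "\<bar>\<Psi> \<phi>\<bar> \<le> B * dual_norm V N \<phi>" if \<phi>: "\<phi> \<in> dual_space V N" for \<phi>
  proof -
    have "\<Psi> \<phi> \<le> dual_norm V N \<phi> * B"
      unfolding \<Psi>_def using seq_bound[OF \<phi>]
      by (intro upper[OF seq_Bseq[OF \<phi>]] always_eventually) (auto simp: abs_le_iff)
    moreover have "- (dual_norm V N \<phi> * B) \<le> \<Psi> \<phi>"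
      unfolding \<Psi>_def using seq_bound[OF \<phi>]
      by (intro lower[OF seq_Bseq[OF \<phi>]] always_eventually) (metis abs_le_D2 minus_le_iff)
    ultimately show ?thesis by (simp add: abs_le_iff mult.commute)
  qed
  moreover have "\<Psi> (\<lambda>f. a * \<phi> f + b * \<psi> f) = a * \<Psi> \<phi> + b * \<Psi> \<psi>"
    if "\<phi> \<in> dual_space V N" "\<psi> \<in> dual_space V N" for \<phi> \<psi> a b
    using linear_onD[OF L, of "\<lambda>n. \<phi> (xs n)" "\<lambda>n. \<psi> (xs n)" a b] seq_Bseq that
    unfolding \<Psi>_def by simp
  ultimately have "\<Psi> \<in> bidual_space V N" unfolding bidual_space_def by blast
  moreover have "c \<le> \<Psi> \<phi>"
    if "\<phi> \<in> dual_space V N" "eventually (\<lambda>n. c \<le> \<phi> (xs n)) sequentially" for \<phi> c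
    using lower[OF seq_Bseq] that unfolding \<Psi>_def by blast
  ultimately show ?thesis by blast
qed

lemma bidual_norm_ge:
  assumes V: "fun_subspace V" and N: "seminorm_on V N" and \<Psi>: "\<Psi> \<in> bidual_space V N"
    and g: "g \<in> V" and \<phi>: "\<phi> \<in> dual_space V N" "dual_norm V N \<phi> \<le> 1"
  shows "\<bar>\<Psi> \<phi> - \<phi> g\<bar> \<le> bidual_norm V N (\<lambda>\<phi>. \<Psi> \<phi> - canonical_emb g \<phi>)"
proof -
  obtain K where K: "\<And>\<phi>. \<phi> \<in> dual_space V N \<Longrightarrow> \<bar>\<Psi> \<phi>\<bar> \<le> K * dual_norm V N \<phi>"
    using \<Psi> unfolding bidual_space_def by blast
  have "\<bar>\<Psi> \<phi>' - \<phi>' g\<bar> \<le> \<bar>K\<bar> + N g"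
    if "\<phi>' \<in> dual_space V N" "dual_norm V N \<phi>' \<le> 1" for \<phi>'
  proof -
    have "K * dual_norm V N \<phi>' \<le> \<bar>K\<bar>"
      using mult_right_mono[OF abs_ge_self dual_norm_nonneg[OF V N that(1)], of K]
        mult_left_le[OF that(2), of "\<bar>K\<bar>"] by simp
    moreover have "dual_norm V N \<phi>' * N g \<le> N g"
      using that(2) seminorm_on_nonneg[OF N V g] mult_right_mono by fastforce
    ultimately show ?thesis using K[OF that(1)] dual_space_bound[OF V N that(1) g] by linarith
  qed
  then have "bdd_above ((\<lambda>\<phi>. \<bar>\<Psi> \<phi> - canonical_emb g \<phi>\<bar>) ` {\<phi> \<in> dual_space V N. dual_norm V N \<phi> \<le> 1})"
    unfolding canonical_emb_def bdd_above_def by blast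
  then have "\<bar>\<Psi> \<phi> - canonical_emb g \<phi>\<bar> \<le> bidual_norm V N (\<lambda>\<phi>. \<Psi> \<phi> - canonical_emb g \<phi>)"
    unfolding bidual_norm_def using \<phi> by (intro cSup_upper) auto
  then show ?thesis unfolding canonical_emb_def .
qed

lemma convex_near_weak_cluster_point:
  assumes V: "fun_subspace V" and N: "seminorm_on V N"
    and cluster: "\<forall>\<phi>\<in>dual_space V N. \<forall>c. eventually (\<lambda>n. c \<le> \<phi> (xs n)) sequentially \<longrightarrow> c \<le> \<Psi> \<phi>"
    and g: "g \<in> V" and close: "\<forall>\<phi>\<in>dual_space V N. dual_norm V N \<phi> \<le> 1 \<longrightarrow> \<bar>\<Psi> \<phi> - \<phi> g\<bar> < e"
    and D: "D \<subseteq> V" "fun_convex D" and xs: "\<forall>n\<ge>k. xs n \<in> D"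
  shows "\<exists>d\<in>D. N (\<lambda>x. d x - g x) < e"
proof (rule ccontr)
  assume "\<not> ?thesis"
  then have far: "\<forall>d'\<in>(\<lambda>d x. d x - g x) ` D. e \<le> N d'" by (auto simp: not_less)
  \<comment> \<open>the translate \<open>D - g\<close> stays at distance \<open>e\<close> from \<open>0\<close>, so a functional of norm \<open>1\<close> separates it\<close>
  have "(\<lambda>d x. d x - g x) ` D \<subseteq> V" using D(1) fun_subspace_diff[OF V _ g] by blast
  moreover have "fun_convex ((\<lambda>d x. d x - g x) ` D)"
    unfolding fun_convex_def
  proof (intro ballI allI impI)
    fix d1 d2 and t :: real assume "d1 \<in> (\<lambda>d x. d x - g x) ` D" "d2 \<in> (\<lambda>d x. d x - g x) ` D" "0 \<le> t \<and> t \<le> 1"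
    then obtain e1 e2 where "e1 \<in> D" "e2 \<in> D" "d1 = (\<lambda>x. e1 x - g x)" "d2 = (\<lambda>x. e2 x - g x)" by blast
    moreover have "(\<lambda>x. t * (e1 x - g x) + (1 - t) * (e2 x - g x))
        = (\<lambda>x. (t * e1 x + (1 - t) * e2 x) - g x)" by (auto simp: algebra_simps)
    ultimately show "(\<lambda>x. t * d1 x + (1 - t) * d2 x) \<in> (\<lambda>d x. d x - g x) ` D"
      using fun_convexD[OF D(2)] \<open>0 \<le> t \<and> t \<le> 1\<close> by auto
  qed
  moreover have "(\<lambda>d x. d x - g x) ` D \<noteq> {}" using xs by blast
  ultimately obtain \<phi> where \<phi>: "\<phi> \<in> dual_space V N" "dual_norm V N \<phi> \<le> 1"
    and sep: "\<forall>d\<in>D. e \<le> \<phi> (\<lambda>x. d x - g x)"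
    using seminorm_separation[OF V N _ _ _ far] by blast
  have "eventually (\<lambda>n. \<phi> g + e \<le> \<phi> (xs n)) sequentially"
    unfolding eventually_sequentially
    using sep xs linear_on_diff[OF dual_space_linear[OF \<phi>(1)] _ g] D(1) by (intro exI[of _ k]) force
  then have "\<phi> g + e \<le> \<Psi> \<phi>" using cluster \<phi>(1) by blast
  then show False using close \<phi> by force
qed

section \<open>Normal contractions on \<open>L\<^sup>2\<close> and truncations\<close>

lemma normal_contraction_abs_le: "normal_contraction T \<Longrightarrow> \<bar>T t\<bar> \<le> \<bar>t\<bar>"
  unfolding normal_contraction_def by (metis diff_zero)

lemma normal_contraction_borel:
  assumes "normal_contraction T" shows "T \<in> borel_measurable borel"
proof -
  have "1-lipschitz_on UNIV T"
    using assms unfolding normal_contraction_def by (intro lipschitz_onI) (auto simp: dist_real_def)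
  then show ?thesis
    using lipschitz_on_continuous_on borel_measurable_continuous_onI by blast
qed

lemma normal_contraction_rescale:
  assumes T: "normal_contraction T" and l: "l > 0"
  shows "normal_contraction (\<lambda>u. T (l * u) / l)"
proof -
  have "\<bar>T (l * x) / l - T (l * y) / l\<bar> \<le> \<bar>x - y\<bar>" for x y
  proof -
    have "\<bar>T (l * x) - T (l * y)\<bar> \<le> \<bar>l * x - l * y\<bar>"
      using T unfolding normal_contraction_def by blast
    also have "\<dots> = l * \<bar>x - y\<bar>"
      using l by (simp add: abs_mult right_diff_distrib[symmetric])
    finally have "\<bar>T (l * x) - T (l * y)\<bar> / l \<le> \<bar>x - y\<bar>"
      using l by (simp add: divide_simps mult.commute)
    then show ?thesis using l by (simp add: diff_divide_distrib[symmetric])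
  qed
  then show ?thesis using T unfolding normal_contraction_def by simp
qed

lemma normal_contraction_convex:
  assumes "normal_contraction T1" "normal_contraction T2" "0 \<le> a" "a \<le> 1"
  shows "normal_contraction (\<lambda>u. a * T1 u + (1 - a) * T2 u)"
proof -
  have "\<bar>(a * T1 x + (1 - a) * T2 x) - (a * T1 y + (1 - a) * T2 y)\<bar> \<le> \<bar>x - y\<bar>" for x y
  proof -
    have "\<bar>(a * T1 x + (1 - a) * T2 x) - (a * T1 y + (1 - a) * T2 y)\<bar>
        = \<bar>a * (T1 x - T1 y) + (1 - a) * (T2 x - T2 y)\<bar>"
      by (simp add: algebra_simps)
    also have "\<dots> \<le> a * \<bar>T1 x - T1 y\<bar> + (1 - a) * \<bar>T2 x - T2 y\<bar>"
      using assms(3,4) by (metis abs_mult abs_of_nonneg abs_triangle_ineq diff_ge_0_iff_ge)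
    also have "\<dots> \<le> a * \<bar>x - y\<bar> + (1 - a) * \<bar>x - y\<bar>"
      using assms unfolding normal_contraction_def by (intro add_mono mult_left_mono) auto
    finally show ?thesis by (simp add: algebra_simps)
  qed
  then show ?thesis using assms unfolding normal_contraction_def by simp
qed

lemma L2_borel_measurable: "g \<in> L2 M \<Longrightarrow> g \<in> borel_measurable M"
  unfolding L2_def by simp

lemma L2_integrable_square: "g \<in> L2 M \<Longrightarrow> integrable M (\<lambda>x. (g x)\<^sup>2)"
  unfolding L2_def by simp

lemma fun_subspace_L2: "fun_subspace (L2 M)"
  unfolding fun_subspace_def
proof (intro conjI ballI allI)
  fix g h a b assume g: "g \<in> L2 M" and h: "h \<in> L2 M"
  have meas: "(\<lambda>x. a * g x + b * h x) \<in> borel_measurable M"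
    using L2_borel_measurable[OF g] L2_borel_measurable[OF h] by simp
  have bound: "(a * g x + b * h x)\<^sup>2 \<le> 2 * a\<^sup>2 * (g x)\<^sup>2 + 2 * b\<^sup>2 * (h x)\<^sup>2" for x
  proof -
    have "(a * g x + b * h x)\<^sup>2 + (a * g x - b * h x)\<^sup>2 = 2 * a\<^sup>2 * (g x)\<^sup>2 + 2 * b\<^sup>2 * (h x)\<^sup>2"
      by (simp add: power2_eq_square algebra_simps)
    moreover have "0 \<le> (a * g x - b * h x)\<^sup>2" by simp
    ultimately show ?thesis by linarith
  qed
  have "integrable M (\<lambda>x. 2 * a\<^sup>2 * (g x)\<^sup>2 + 2 * b\<^sup>2 * (h x)\<^sup>2)"
    using L2_integrable_square[OF g] L2_integrable_square[OF h] by simp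
  then have "integrable M (\<lambda>x. (a * g x + b * h x)\<^sup>2)"
    by (rule Bochner_Integration.integrable_bound) (use meas bound in auto)
  then show "(\<lambda>x. a * g x + b * h x) \<in> L2 M" using meas unfolding L2_def by simp
qed (simp add: L2_def)

lemma L2_divide: "g \<in> L2 M \<Longrightarrow> (\<lambda>x. g x / c) \<in> L2 M"
  using fun_subspace_scale[OF fun_subspace_L2, of g M "1 / c"] by simp

lemma L2_contraction:
  assumes T: "normal_contraction T" and g: "g \<in> L2 M"
  shows "(\<lambda>x. T (g x)) \<in> L2 M"
proof -
  have meas: "(\<lambda>x. T (g x)) \<in> borel_measurable M"
    using measurable_compose[OF L2_borel_measurable[OF g] normal_contraction_borel[OF T]]
    by (simp add: o_def)
  have "(T (g x))\<^sup>2 \<le> (g x)\<^sup>2" for x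
    using normal_contraction_abs_le[OF T] by (simp add: abs_le_square_iff)
  then have "integrable M (\<lambda>x. (T (g x))\<^sup>2)"
    using meas by (intro Bochner_Integration.integrable_bound[OF L2_integrable_square[OF g]]) auto
  then show ?thesis using meas unfolding L2_def by simp
qed

lemma L2_contraction_tendsto_zero:
  assumes f: "f \<in> L2 M" and s: "\<And>k. normal_contraction (s k)" and pointwise: "\<And>t. (\<lambda>k. s k t) \<longlonglongrightarrow> 0"
  shows "(\<lambda>k. integral\<^sup>L M (\<lambda>x. (s k (f x))\<^sup>2)) \<longlonglongrightarrow> 0"
proof -
  have "(\<lambda>k. integral\<^sup>L M (\<lambda>x. (s k (f x))\<^sup>2)) \<longlonglongrightarrow> integral\<^sup>L M (\<lambda>x. 0)"
  proof (rule integral_dominated_convergence[where w = "\<lambda>x. (f x)\<^sup>2"])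
    show "(\<lambda>x. (s k (f x))\<^sup>2) \<in> borel_measurable M" for k
      using L2_borel_measurable[OF L2_contraction[OF s f]] by simp
    show "AE x in M. norm ((s k (f x))\<^sup>2) \<le> (f x)\<^sup>2" for k
      using normal_contraction_abs_le[OF s] by (simp add: abs_le_square_iff)
    show "AE x in M. (\<lambda>k. (s k (f x))\<^sup>2) \<longlonglongrightarrow> 0"
      using tendsto_power[OF pointwise, of _ 2] by simp
  qed (use L2_integrable_square[OF f] in simp_all)
  then show ?thesis by simp
qed

lemma ennreal_half_le: "(a::ennreal) + a \<le> b + b \<Longrightarrow> a \<le> b"
  by (meson add_strict_mono linorder_not_le)

lemma clamp_normal_contraction: "0 \<le> r \<Longrightarrow> normal_contraction (clamp r)"
  unfolding normal_contraction_def clamp_def by (auto simp: abs_if min_def max_def)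

lemma clamp_abs_le: "0 \<le> r \<Longrightarrow> \<bar>clamp r t\<bar> \<le> r"
  unfolding clamp_def by (auto simp: abs_if min_def max_def)

definition soft_threshold :: "real \<Rightarrow> real \<Rightarrow> real" where
  "soft_threshold r t = t - clamp r t"

lemma soft_threshold_normal_contraction: "0 \<le> r \<Longrightarrow> normal_contraction (soft_threshold r)"
  unfolding normal_contraction_def soft_threshold_def clamp_def by (auto simp: abs_if min_def max_def)

lemma soft_threshold_mono: "mono (soft_threshold r)"
  unfolding mono_def soft_threshold_def clamp_def by (auto simp: min_def max_def)

lemma soft_threshold_antimono: "0 \<le> r \<Longrightarrow> r \<le> R \<Longrightarrow> \<bar>soft_threshold R t\<bar> \<le> \<bar>soft_threshold r t\<bar>"
  unfolding soft_threshold_def clamp_def by (auto simp: abs_if min_def max_def)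

lemma soft_threshold_eq_0: "\<bar>t\<bar> \<le> r \<Longrightarrow> soft_threshold r t = 0"
  unfolding soft_threshold_def clamp_def by (auto simp: abs_if min_def max_def split: if_splits)

text \<open>
  Members \<open>T\<close> of \<open>small_truncations \<epsilon>\<close> satisfy \<open>clamp y \<circ> T = clamp y\<close> for all small \<open>y > 0\<close>;
  members of \<open>tail_truncations r\<close> are translates of the identity far out, so that large
  soft thresholds factor through them.
\<close>

definition small_truncations :: "real \<Rightarrow> (real \<Rightarrow> real) set" where
  "small_truncations \<epsilon> = {T. normal_contraction T \<and> (\<forall>t. \<bar>T t\<bar> \<le> \<epsilon>)
      \<and> (\<exists>d>0. (\<forall>t\<ge>0. min t d \<le> T t) \<and> (\<forall>t\<le>0. T t \<le> max t (- d)))}"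

definition tail_truncations :: "real \<Rightarrow> (real \<Rightarrow> real) set" where
  "tail_truncations r = {T. normal_contraction T \<and> mono T \<and> (\<forall>t. \<bar>T t\<bar> \<le> \<bar>soft_threshold r t\<bar>)
      \<and> (\<exists>B c. 0 \<le> c \<and> c \<le> B \<and> (\<forall>t\<ge>B. T t = t - c) \<and> (\<forall>t\<le>-B. T t = t + c))}"

lemma small_truncations_normal_contraction: "T \<in> small_truncations \<epsilon> \<Longrightarrow> normal_contraction T"
  unfolding small_truncations_def by blast

lemma tail_truncations_normal_contraction: "T \<in> tail_truncations r \<Longrightarrow> normal_contraction T"
  unfolding tail_truncations_def by blast

lemma tail_truncations_abs_le: "T \<in> tail_truncations r \<Longrightarrow> \<bar>T t\<bar> \<le> \<bar>soft_threshold r t\<bar>"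
  unfolding tail_truncations_def by blast

lemma convex_comb_abs_le:
  fixes a b c t :: real
  assumes "\<bar>a\<bar> \<le> c" "\<bar>b\<bar> \<le> c" "0 \<le> t" "t \<le> 1"
  shows "\<bar>t * a + (1 - t) * b\<bar> \<le> c"
proof -
  have "\<bar>t * a + (1 - t) * b\<bar> \<le> t * \<bar>a\<bar> + (1 - t) * \<bar>b\<bar>"
    using assms(3,4) by (metis abs_mult abs_of_nonneg abs_triangle_ineq diff_ge_0_iff_ge)
  also have "\<dots> \<le> t * c + (1 - t) * c" using assms by (intro add_mono mult_left_mono) auto
  finally show ?thesis by (simp add: algebra_simps)
qed

lemma convex_comb_ge:
  fixes a b c t :: real
  assumes "c \<le> a" "c \<le> b" "0 \<le> t" "t \<le> 1"
  shows "c \<le> t * a + (1 - t) * b"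
proof -
  have "t * c + (1 - t) * c \<le> t * a + (1 - t) * b" using assms by (intro add_mono mult_left_mono) auto
  then show ?thesis by (simp add: algebra_simps)
qed

lemma convex_comb_le:
  fixes a b c t :: real
  assumes "a \<le> c" "b \<le> c" "0 \<le> t" "t \<le> 1"
  shows "t * a + (1 - t) * b \<le> c"
  using convex_comb_ge[of "- c" "- a" "- b" t] assms by (simp add: algebra_simps)

lemma fun_convex_small_truncations: "fun_convex (small_truncations \<epsilon>)"
  unfolding fun_convex_def
proof (intro ballI allI impI)
  fix T1 T2 and t :: real
  assume T1: "T1 \<in> small_truncations \<epsilon>" and T2: "T2 \<in> small_truncations \<epsilon>" and t: "0 \<le> t \<and> t \<le> 1"
  obtain d1 where d1: "d1 > 0" "\<forall>u\<ge>0. min u d1 \<le> T1 u" "\<forall>u\<le>0. T1 u \<le> max u (- d1)"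
    using T1 unfolding small_truncations_def by auto
  obtain d2 where d2: "d2 > 0" "\<forall>u\<ge>0. min u d2 \<le> T2 u" "\<forall>u\<le>0. T2 u \<le> max u (- d2)"
    using T2 unfolding small_truncations_def by auto
  define d where "d = min d1 d2"
  have "min u d \<le> t * T1 u + (1 - t) * T2 u" if "u \<ge> 0" for u
  proof -
    have "min u d \<le> T1 u" "min u d \<le> T2 u"
      using d1(2) d2(2) that unfolding d_def by (auto intro: order_trans)
    then show ?thesis using t by (intro convex_comb_ge) auto
  qed
  moreover have "t * T1 u + (1 - t) * T2 u \<le> max u (- d)" if "u \<le> 0" for u
  proof -
    have "T1 u \<le> max u (- d)" "T2 u \<le> max u (- d)"
      using d1(3) d2(3) that unfolding d_def by (auto intro: order_trans)
    then show ?thesis using t by (intro convex_comb_le) auto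
  qed
  moreover have "\<bar>t * T1 u + (1 - t) * T2 u\<bar> \<le> \<epsilon>" for u
    using T1 T2 t unfolding small_truncations_def by (intro convex_comb_abs_le) auto
  moreover have "normal_contraction (\<lambda>u. t * T1 u + (1 - t) * T2 u)"
    using T1 T2 t unfolding small_truncations_def by (intro normal_contraction_convex) auto
  moreover have "d > 0" using d1 d2 unfolding d_def by simp
  ultimately show "(\<lambda>u. t * T1 u + (1 - t) * T2 u) \<in> small_truncations \<epsilon>"
    unfolding small_truncations_def by blast
qed

lemma clamp_small_truncations: "0 < r \<Longrightarrow> r \<le> \<epsilon> \<Longrightarrow> clamp r \<in> small_truncations \<epsilon>"
  unfolding small_truncations_def using clamp_normal_contraction[of r] clamp_abs_le[of r]
  by (intro CollectI conjI exI[of _ r]) (auto simp: clamp_def)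

lemma small_truncations_abs_le: "T \<in> small_truncations \<epsilon> \<Longrightarrow> \<bar>T t\<bar> \<le> \<bar>clamp \<epsilon> t\<bar>"
  unfolding small_truncations_def using normal_contraction_abs_le[of T t]
  by (auto simp: clamp_def abs_if min_def max_def split: if_splits)

lemma clamp_comp_small_truncation:
  assumes "T \<in> small_truncations \<epsilon>"
  shows "\<exists>d>0. \<forall>y t. 0 < y \<and> y \<le> d \<longrightarrow> clamp y (T t) = clamp y t"
proof -
  obtain d where d: "d > 0" "\<forall>t\<ge>0. min t d \<le> T t" "\<forall>t\<le>0. T t \<le> max t (- d)"
    and T: "normal_contraction T" using assms unfolding small_truncations_def by auto
  \<comment> \<open>\<open>T t\<close> lies between \<open>t\<close> and \<open>clamp d t\<close>, which have the same clamp at levels \<open>y \<le> d\<close>\<close>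
  have "clamp y (T t) = clamp y t" if y: "0 < y" "y \<le> d" for y t
  proof (cases "t \<ge> 0")
    case True
    then have "min t d \<le> T t" "T t \<le> t" using d(2) normal_contraction_abs_le[OF T, of t] by auto
    then show ?thesis using y True unfolding clamp_def by (auto simp: min_def max_def split: if_splits)
  next
    case False
    then have "T t \<le> max t (- d)" "t \<le> T t" using d(3) normal_contraction_abs_le[OF T, of t] by auto
    then show ?thesis using y False unfolding clamp_def by (auto simp: min_def max_def split: if_splits)
  qed
  with d(1) show ?thesis by blast
qed

lemma fun_convex_tail_truncations: "fun_convex (tail_truncations r)"
  unfolding fun_convex_def
proof (intro ballI allI impI)
  fix T1 T2 and t :: real
  assume T1: "T1 \<in> tail_truncations r" and T2: "T2 \<in> tail_truncations r" and t: "0 \<le> t \<and> t \<le> 1"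
  obtain B1 c1 where b1: "0 \<le> c1" "c1 \<le> B1" "\<forall>u\<ge>B1. T1 u = u - c1" "\<forall>u\<le>-B1. T1 u = u + c1"
    using T1 unfolding tail_truncations_def by auto
  obtain B2 c2 where b2: "0 \<le> c2" "c2 \<le> B2" "\<forall>u\<ge>B2. T2 u = u - c2" "\<forall>u\<le>-B2. T2 u = u + c2"
    using T2 unfolding tail_truncations_def by auto
  define B where "B = max B1 B2"
  define c where "c = t * c1 + (1 - t) * c2"
  have "0 \<le> c" "c \<le> B" unfolding c_def B_def using b1 b2 t
    by (auto intro!: convex_comb_ge convex_comb_le)
  moreover have "\<forall>u\<ge>B. t * T1 u + (1 - t) * T2 u = u - c"
  proof (intro allI impI)
    fix u assume "B \<le> u"
    then have T12: "T1 u = u - c1" "T2 u = u - c2" using b1(3) b2(3) unfolding B_def by auto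
    show "t * T1 u + (1 - t) * T2 u = u - c" unfolding c_def T12 by (simp add: algebra_simps)
  qed
  moreover have "\<forall>u\<le>-B. t * T1 u + (1 - t) * T2 u = u + c"
  proof (intro allI impI)
    fix u assume "u \<le> - B"
    then have T12: "T1 u = u + c1" "T2 u = u + c2" using b1(4) b2(4) unfolding B_def by auto
    show "t * T1 u + (1 - t) * T2 u = u + c" unfolding c_def T12 by (simp add: algebra_simps)
  qed
  moreover have "\<bar>t * T1 u + (1 - t) * T2 u\<bar> \<le> \<bar>soft_threshold r u\<bar>" for u
    using T1 T2 t unfolding tail_truncations_def by (intro convex_comb_abs_le) auto
  moreover have "mono (\<lambda>u. t * T1 u + (1 - t) * T2 u)"
    using T1 T2 t unfolding tail_truncations_def mono_def by (auto intro!: add_mono mult_left_mono)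
  moreover have "normal_contraction (\<lambda>u. t * T1 u + (1 - t) * T2 u)"
    using T1 T2 t unfolding tail_truncations_def by (intro normal_contraction_convex) auto
  ultimately show "(\<lambda>u. t * T1 u + (1 - t) * T2 u) \<in> tail_truncations r"
    unfolding tail_truncations_def by blast
qed

lemma soft_threshold_tail_truncations:
  assumes "0 \<le> r" "r \<le> R"
  shows "soft_threshold R \<in> tail_truncations r"
proof -
  have "\<forall>t\<ge>R. soft_threshold R t = t - R" "\<forall>t\<le>-R. soft_threshold R t = t + R"
    using assms unfolding soft_threshold_def clamp_def by auto
  then show ?thesis
    unfolding tail_truncations_def
    using soft_threshold_normal_contraction[of R] soft_threshold_mono[of R] soft_threshold_antimono assms
    by (intro CollectI conjI exI[of _ R] allI) auto
qed

lemma soft_threshold_comp_tail_truncation: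
  assumes "T \<in> tail_truncations r"
  shows "\<exists>B c. 0 \<le> c \<and> c \<le> B \<and> (\<forall>R t. B \<le> R \<longrightarrow> soft_threshold R t = soft_threshold (R - c) (T t))"
proof -
  obtain B c where c: "0 \<le> c" "c \<le> B" and tails: "\<forall>t\<ge>B. T t = t - c" "\<forall>t\<le>-B. T t = t + c"
    and mono: "mono T" using assms unfolding tail_truncations_def by auto
  \<comment> \<open>\<open>T\<close> translates the identity beyond \<open>B\<close>; on \<open>[-R, R]\<close> it stays in \<open>[c - R, R - c]\<close> by monotonicity\<close>
  have "soft_threshold R t = soft_threshold (R - c) (T t)" if R: "B \<le> R" for R t
  proof -
    consider "R \<le> t" | "t \<le> - R" | "- R < t" "t < R" by linarith
    then show ?thesis
    proof cases
      case 1 then show ?thesis using tails R c unfolding soft_threshold_def clamp_def by auto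
    next
      case 2 then show ?thesis using tails R c unfolding soft_threshold_def clamp_def by auto
    next
      case 3
      then have "T (- R) \<le> T t" "T t \<le> T R" using mono unfolding mono_def by auto
      then have "c - R \<le> T t" "T t \<le> R - c" using tails R by auto
      then show ?thesis using 3 unfolding soft_threshold_def clamp_def by auto
    qed
  qed
  with c show ?thesis by blast
qed

lemma clamp_diff_normal_contraction:
  "0 \<le> d \<Longrightarrow> d \<le> R \<Longrightarrow> normal_contraction (\<lambda>t. clamp R t - clamp d t)"
  unfolding normal_contraction_def clamp_def by (auto simp: abs_if min_def max_def split: if_splits)

lemma clamp_diff_abs_le:
  assumes "0 < d" "d \<le> R"
  shows "\<bar>clamp R t - clamp d t\<bar> \<le> t\<^sup>2 / d"
proof (cases "\<bar>t\<bar> \<le> d")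
  case True
  then have "clamp R t - clamp d t = 0"
    using assms unfolding clamp_def by (auto simp: abs_if min_def max_def split: if_splits)
  then show ?thesis using assms by simp
next
  case False
  then have "\<bar>t\<bar> * d \<le> \<bar>t\<bar> * \<bar>t\<bar>" by (intro mult_left_mono) auto
  then have "\<bar>t\<bar> \<le> t\<^sup>2 / d" using assms by (simp add: field_simps power2_eq_square)
  moreover have "\<bar>clamp R t - clamp d t\<bar> \<le> \<bar>t\<bar>"
    using normal_contraction_abs_le[OF clamp_diff_normal_contraction[of d R]] assms by simp
  ultimately show ?thesis by linarith
qed

section \<open>The Luxemburg norm of a nonlinear Dirichlet form\<close>

locale nonlinear_dirichlet =
  fixes M :: "'a measure" and E :: "('a \<Rightarrow> real) \<Rightarrow> ennreal"
  assumes dirichlet_form: "nonlinear_dirichlet_form M E"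
begin

abbreviation V where "V \<equiv> MSet M E"
abbreviation N where "N \<equiv> lux_norm E"

lemma E_zero: "E (\<lambda>x. 0) = 0"
  using dirichlet_form unfolding nonlinear_dirichlet_form_def by blast

lemma E_uminus: "g \<in> L2 M \<Longrightarrow> E (\<lambda>x. - g x) = E g"
  using dirichlet_form unfolding nonlinear_dirichlet_form_def by blast

lemma E_convex:
  "g \<in> L2 M \<Longrightarrow> h \<in> L2 M \<Longrightarrow> 0 \<le> t \<Longrightarrow> t \<le> 1 \<Longrightarrow>
    E (\<lambda>x. t * g x + (1 - t) * h x) \<le> ennreal t * E g + ennreal (1 - t) * E h"
  using dirichlet_form unfolding nonlinear_dirichlet_form_def by blast

lemma E_lower_semicontinuous:
  "(\<And>n. gs n \<in> L2 M) \<Longrightarrow> g \<in> L2 M \<Longrightarrow>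
    (\<lambda>n. integral\<^sup>L M (\<lambda>x. (gs n x - g x)\<^sup>2)) \<longlonglongrightarrow> 0 \<Longrightarrow> E g \<le> liminf (\<lambda>n. E (gs n))"
  using dirichlet_form unfolding nonlinear_dirichlet_form_def by blast

lemma E_scale_le:
  assumes "g \<in> L2 M" "0 \<le> t" "t \<le> 1"
  shows "E (\<lambda>x. t * g x) \<le> ennreal t * E g"
  using E_convex[OF assms(1) fun_subspace_zero[OF fun_subspace_L2] assms(2,3)] E_zero by simp

lemma E_contraction:
  assumes T: "normal_contraction T" and g: "g \<in> L2 M"
  shows "E (\<lambda>x. T (g x)) \<le> E g"
proof -
  have "\<forall>C. normal_contraction C \<longrightarrow> (\<forall>f\<in>L2 M. \<forall>g\<in>L2 M.
      E (\<lambda>x. f x + C (g x)) + E (\<lambda>x. f x - C (g x)) \<le> E (\<lambda>x. f x + g x) + E (\<lambda>x. f x - g x))"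
    using dirichlet_form unfolding nonlinear_dirichlet_form_def by blast
  from this[rule_format, OF T fun_subspace_zero[OF fun_subspace_L2] g]
  have "E (\<lambda>x. 0 + T (g x)) + E (\<lambda>x. 0 - T (g x)) \<le> E (\<lambda>x. 0 + g x) + E (\<lambda>x. 0 - g x)" .
  then have "E (\<lambda>x. T (g x)) + E (\<lambda>x. T (g x)) \<le> E g + E g"
    using E_uminus[OF g] E_uminus[OF L2_contraction[OF T g]] by simp
  then show ?thesis by (rule ennreal_half_le)
qed

lemma E_contraction_div:
  assumes T: "normal_contraction T" and g: "g \<in> L2 M" and l: "l > 0"
  shows "E (\<lambda>x. T (g x) / l) \<le> E (\<lambda>x. g x / l)"
proof -
  from E_contraction[OF normal_contraction_rescale[OF T l] L2_divide[OF g, of l]] l show ?thesis by simp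
qed

lemma E_scale_finite:
  assumes g: "g \<in> L2 M" and l: "l > 0" "E (\<lambda>x. l * g x) < top" and c: "\<bar>c\<bar> \<le> l"
  shows "E (\<lambda>x. c * g x) < top"
proof -
  have lg: "(\<lambda>x. l * g x) \<in> L2 M" using fun_subspace_scale[OF fun_subspace_L2 g] .
  have "E (\<lambda>x. (\<bar>c\<bar> / l) * (l * g x)) \<le> ennreal (\<bar>c\<bar> / l) * E (\<lambda>x. l * g x)"
    using E_scale_le[OF lg, of "\<bar>c\<bar> / l"] l c by simp
  also have "\<dots> < top" using l by (simp add: ennreal_mult_less_top)
  finally have "E (\<lambda>x. \<bar>c\<bar> * g x) < top" using l by simp
  moreover have "E (\<lambda>x. - (\<bar>c\<bar> * g x)) = E (\<lambda>x. \<bar>c\<bar> * g x)"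
    using E_uminus[OF fun_subspace_scale[OF fun_subspace_L2 g]] .
  ultimately show ?thesis by (cases "c \<ge> 0") auto
qed

lemma lux_norm_admissible: "g \<in> V \<Longrightarrow> \<exists>l>0. E (\<lambda>x. g x / l) \<le> 1"
proof -
  assume "g \<in> V"
  then have "((\<lambda>l. E (\<lambda>x. l * g x)) \<longlongrightarrow> 0) (at_right 0)" unfolding MSet_def by simp
  then have "eventually (\<lambda>l. E (\<lambda>x. l * g x) < 1) (at_right (0::real))"
    by (rule order_tendstoD) simp
  then obtain b where b: "b > 0" "\<And>l. 0 < l \<Longrightarrow> l < b \<Longrightarrow> E (\<lambda>x. l * g x) < 1"
    unfolding eventually_at_right_field by auto
  moreover have "(\<lambda>x. (b / 2) * g x) = (\<lambda>x. g x / (2 / b))" by auto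
  ultimately have "E (\<lambda>x. g x / (2 / b)) < 1" using b(2)[of "b / 2"] by simp
  then show ?thesis using b(1) by (intro exI[of _ "2 / b"]) auto
qed

lemma MSet_iff: "g \<in> V \<longleftrightarrow> g \<in> L2 M \<and> (\<exists>l>0. E (\<lambda>x. l * g x) < top)"
proof
  assume g: "g \<in> V"
  then obtain l where l: "l > 0" "E (\<lambda>x. g x / l) \<le> 1" using lux_norm_admissible by blast
  then have "E (\<lambda>x. (1 / l) * g x) < top" using ennreal_one_less_top by (simp add: le_less_trans)
  then show "g \<in> L2 M \<and> (\<exists>l>0. E (\<lambda>x. l * g x) < top)"
    using g l(1) unfolding MSet_def by (intro conjI exI[of _ "1 / l"]) auto
next
  assume "g \<in> L2 M \<and> (\<exists>l>0. E (\<lambda>x. l * g x) < top)"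
  then obtain l where g: "g \<in> L2 M" and l: "l > 0" "E (\<lambda>x. l * g x) < top" by auto
  define k where "k = enn2real (E (\<lambda>x. l * g x))"
  have k: "E (\<lambda>x. l * g x) = ennreal k" "0 \<le> k" using l unfolding k_def by (auto simp: less_top)
  \<comment> \<open>convexity makes \<open>s \<mapsto> E (s g)\<close> bounded by a linear function on \<open>[0, l]\<close>\<close>
  have "E (\<lambda>x. s * g x) \<le> ennreal (s / l * k)" if "0 < s" "s \<le> l" for s
  proof -
    have "E (\<lambda>x. (s / l) * (l * g x)) \<le> ennreal (s / l) * E (\<lambda>x. l * g x)"
      using E_scale_le[OF fun_subspace_scale[OF fun_subspace_L2 g, of l], of "s / l"] l that by simp
    then show ?thesis using l k that by (simp add: ennreal_mult[symmetric])
  qed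
  then have upper: "eventually (\<lambda>s. E (\<lambda>x. s * g x) \<le> ennreal (s / l * k)) (at_right 0)"
    unfolding eventually_at_right_field using l by (intro exI[of _ l]) auto
  have "((\<lambda>s. ennreal (s / l * k)) \<longlongrightarrow> ennreal (0 / l * k)) (at_right 0)"
    using l by (intro tendsto_ennrealI tendsto_intros) auto
  then have "((\<lambda>s. ennreal (s / l * k)) \<longlongrightarrow> 0) (at_right 0)" by simp
  from tendsto_sandwich[OF _ upper tendsto_const this]
  have "((\<lambda>s. E (\<lambda>x. s * g x)) \<longlongrightarrow> 0) (at_right 0)" by simp
  then show "g \<in> V" using g unfolding MSet_def by simp
qed

lemma MSet_L2: "g \<in> V \<Longrightarrow> g \<in> L2 M"
  unfolding MSet_def by simp

lemma fun_subspace_MSet: "fun_subspace V"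
  unfolding fun_subspace_def
proof (intro conjI ballI allI)
  show "(\<lambda>x. 0) \<in> V"
    unfolding MSet_iff using fun_subspace_zero[OF fun_subspace_L2] E_zero by (auto intro!: exI[of _ 1])
next
  fix g h a b assume "g \<in> V" "h \<in> V"
  then obtain l1 l2 where g: "g \<in> L2 M" "l1 > 0" "E (\<lambda>x. l1 * g x) < top"
    and h: "h \<in> L2 M" "l2 > 0" "E (\<lambda>x. l2 * h x) < top"
    unfolding MSet_iff by auto
  define l where "l = min (l1 / (2 * (\<bar>a\<bar> + 1))) (l2 / (2 * (\<bar>b\<bar> + 1)))"
  have l: "l > 0" unfolding l_def using g h by (simp add: add_pos_nonneg)
  have "l \<le> l1 / (2 * (\<bar>a\<bar> + 1))" "l \<le> l2 / (2 * (\<bar>b\<bar> + 1))"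
    unfolding l_def by auto
  then have "2 * l * (\<bar>a\<bar> + 1) \<le> l1" "2 * l * (\<bar>b\<bar> + 1) \<le> l2"
    by (simp_all add: field_simps add_pos_nonneg)
  then have "\<bar>2 * l * a\<bar> \<le> l1" "\<bar>2 * l * b\<bar> \<le> l2"
    using l by (auto simp: abs_mult algebra_simps)
  then have fin: "E (\<lambda>x. (2 * l * a) * g x) < top" "E (\<lambda>x. (2 * l * b) * h x) < top"
    using E_scale_finite g h by blast+
  have "E (\<lambda>x. l * (a * g x + b * h x))
      \<le> ennreal (1/2) * E (\<lambda>x. (2 * l * a) * g x) + ennreal (1 - 1/2) * E (\<lambda>x. (2 * l * b) * h x)"
    using E_convex[OF fun_subspace_scale[OF fun_subspace_L2 g(1)]
        fun_subspace_scale[OF fun_subspace_L2 h(1)], of "1/2" "2 * l * a" "2 * l * b"]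
    by (simp add: algebra_simps)
  also have "\<dots> < top"
    using fin by (simp only: ennreal_add_less_top ennreal_mult_less_top ennreal_less_top) blast
  finally have "E (\<lambda>x. l * (a * g x + b * h x)) < top" .
  then show "(\<lambda>x. a * g x + b * h x) \<in> V"
    unfolding MSet_iff using l fun_subspace_lincomb[OF fun_subspace_L2 g(1) h(1)] by blast
qed

lemma MSet_contraction:
  assumes T: "normal_contraction T" and g: "g \<in> V"
  shows "(\<lambda>x. T (g x)) \<in> V"
proof -
  obtain l where gL: "g \<in> L2 M" and l: "l > 0" "E (\<lambda>x. l * g x) < top"
    using g unfolding MSet_iff by auto
  have "E (\<lambda>x. T (g x) / (1 / l)) \<le> E (\<lambda>x. g x / (1 / l))"
    using E_contraction_div[OF T gL, of "1 / l"] l by simp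
  moreover have "(\<lambda>x. T (g x) / (1 / l)) = (\<lambda>x. l * T (g x))" "(\<lambda>x. g x / (1 / l)) = (\<lambda>x. l * g x)"
    by auto
  ultimately have "E (\<lambda>x. l * T (g x)) < top" using l by (simp add: le_less_trans)
  then show ?thesis unfolding MSet_iff using L2_contraction[OF T gL] l by blast
qed

lemma lux_nonneg: "g \<in> V \<Longrightarrow> 0 \<le> N g"
  unfolding lux_norm_def using lux_norm_admissible by (intro cInf_greatest) auto

lemma lux_le: "l > 0 \<Longrightarrow> E (\<lambda>x. g x / l) \<le> 1 \<Longrightarrow> N g \<le> l"
  unfolding lux_norm_def by (intro cInf_lower) (auto simp: bdd_below_def intro!: exI[of _ 0])

lemma lux_le_if_admissible_above:
  assumes "0 \<le> a" "\<And>l. a < l \<Longrightarrow> E (\<lambda>x. g x / l) \<le> 1"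
  shows "N g \<le> a"
proof (rule field_le_epsilon)
  fix e :: real assume "e > 0"
  then show "N g \<le> a + e" using lux_le[of "a + e" g] assms by simp
qed

lemma E_le_one_if_lux_less:
  assumes g: "g \<in> V" and less: "N g < l"
  shows "E (\<lambda>x. g x / l) \<le> 1"
proof -
  have "{l. l > 0 \<and> E (\<lambda>x. g x / l) \<le> 1} \<noteq> {}" using lux_norm_admissible[OF g] by auto
  from cInf_lessD[OF this] less obtain l0 where l0: "l0 > 0" "E (\<lambda>x. g x / l0) \<le> 1" "l0 < l"
    unfolding lux_norm_def by auto
  have eq: "(\<lambda>x. g x / l) = (\<lambda>x. (l0 / l) * (g x / l0))" using l0 by auto
  have "E (\<lambda>x. g x / l) \<le> ennreal (l0 / l) * E (\<lambda>x. g x / l0)"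
    unfolding eq by (rule E_scale_le[OF L2_divide[OF MSet_L2[OF g]]]) (use l0 in auto)
  also have "\<dots> \<le> ennreal (l0 / l) * 1" using l0 by (intro mult_left_mono) auto
  also have "\<dots> \<le> 1" using l0 by simp
  finally show ?thesis .
qed

lemma lux_zero: "N (\<lambda>x. 0) = 0"
proof -
  have "N (\<lambda>x. 0) \<le> 0" by (rule lux_le_if_admissible_above) (auto simp: E_zero)
  then show ?thesis using lux_nonneg[OF fun_subspace_zero[OF fun_subspace_MSet]] by simp
qed

lemma lux_scale_le:
  assumes g: "g \<in> V" and c: "c > 0"
  shows "N (\<lambda>x. c * g x) \<le> c * N g"
proof (rule lux_le_if_admissible_above)
  show "0 \<le> c * N g" using lux_nonneg[OF g] c by simp
next
  fix l assume "c * N g < l"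
  then have "N g < l / c" using c by (simp add: field_simps)
  then have "E (\<lambda>x. g x / (l / c)) \<le> 1" by (rule E_le_one_if_lux_less[OF g])
  moreover have "(\<lambda>x. g x / (l / c)) = (\<lambda>x. c * g x / l)" using c by auto
  ultimately show "E (\<lambda>x. c * g x / l) \<le> 1" by simp
qed

lemma lux_scale:
  assumes g: "g \<in> V" and c: "c > 0"
  shows "N (\<lambda>x. c * g x) = c * N g"
proof -
  have "N g = N (\<lambda>x. (1 / c) * (c * g x))" using c by simp
  also have "\<dots> \<le> (1 / c) * N (\<lambda>x. c * g x)"
    using c by (intro lux_scale_le fun_subspace_scale[OF fun_subspace_MSet g]) simp
  finally have "c * N g \<le> N (\<lambda>x. c * g x)" using c by (simp add: field_simps)
  then show ?thesis using lux_scale_le[OF g c] by simp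
qed

lemma lux_uminus: "g \<in> V \<Longrightarrow> N (\<lambda>x. - g x) = N g"
  unfolding lux_norm_def using E_uminus[OF L2_divide[OF MSet_L2]] by simp

lemma lux_add:
  assumes g: "g \<in> V" and h: "h \<in> V"
  shows "N (\<lambda>x. g x + h x) \<le> N g + N h"
proof (rule lux_le_if_admissible_above)
  show "0 \<le> N g + N h" using lux_nonneg[OF g] lux_nonneg[OF h] by simp
next
  fix l assume l: "N g + N h < l"
  \<comment> \<open>for \<open>l = a + b\<close>, \<open>N g < a\<close>, \<open>N h < b\<close>, \<open>(g + h) / l\<close> is a convex combination of \<open>g / a\<close>, \<open>h / b\<close>\<close>
  define d where "d = (l - (N g + N h)) / 2"
  define a where "a = N g + d"
  define b where "b = N h + d"
  have d: "d > 0" using l unfolding d_def by simp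
  have a: "a > 0" "N g < a" using lux_nonneg[OF g] d unfolding a_def by auto
  have b: "b > 0" "N h < b" using lux_nonneg[OF h] d unfolding b_def by auto
  have ab: "a + b = l" unfolding a_def b_def d_def by simp
  define t where "t = a / l"
  have t: "0 \<le> t" "t \<le> 1" "1 - t = b / l" using a b ab unfolding t_def by (auto simp: field_simps)
  have "(\<lambda>x. (g x + h x) / l) = (\<lambda>x. t * (g x / a) + (1 - t) * (h x / b))"
    using a b ab unfolding t(3) unfolding t_def by (auto simp: add_divide_distrib)
  then have "E (\<lambda>x. (g x + h x) / l) \<le> ennreal t * E (\<lambda>x. g x / a) + ennreal (1 - t) * E (\<lambda>x. h x / b)"
    using E_convex[OF L2_divide[OF MSet_L2[OF g]] L2_divide[OF MSet_L2[OF h]] t(1,2)] by simp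
  also have "\<dots> \<le> ennreal t * 1 + ennreal (1 - t) * 1"
    using E_le_one_if_lux_less[OF g a(2)] E_le_one_if_lux_less[OF h b(2)]
    by (intro add_mono mult_left_mono) auto
  also have "\<dots> = 1" using t(1,2) by (simp add: ennreal_plus[symmetric] del: ennreal_plus)
  finally show "E (\<lambda>x. (g x + h x) / l) \<le> 1" .
qed

lemma seminorm_on_lux: "seminorm_on V N"
  unfolding seminorm_on_def sublinear_on_def
proof (intro conjI ballI allI impI)
  fix g and c :: real assume g: "g \<in> V" and "0 \<le> c"
  then show "N (\<lambda>x. c * g x) = c * N g"
    using lux_scale[OF g, of c] lux_zero by (cases "c = 0") auto
qed (simp_all add: lux_add lux_uminus)

lemma lux_contraction:
  assumes T: "normal_contraction T" and g: "g \<in> V"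
  shows "N (\<lambda>x. T (g x)) \<le> N g"
proof (rule lux_le_if_admissible_above[OF lux_nonneg[OF g]])
  fix l assume l: "N g < l"
  then have "E (\<lambda>x. T (g x) / l) \<le> E (\<lambda>x. g x / l)"
    using E_contraction_div[OF T MSet_L2[OF g]] lux_nonneg[OF g] by simp
  also have "\<dots> \<le> 1" using E_le_one_if_lux_less[OF g l] .
  finally show "E (\<lambda>x. T (g x) / l) \<le> 1" .
qed

lemma lux_lower_semicontinuous:
  assumes hs: "\<And>k. hs k \<in> V" and h: "h \<in> L2 M"
    and conv: "(\<lambda>k. integral\<^sup>L M (\<lambda>x. (hs k x - h x)\<^sup>2)) \<longlonglongrightarrow> 0"
    and c: "0 \<le> c" and bound: "\<And>k. N (hs k) \<le> c"
  shows "N h \<le> c"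
proof (rule lux_le_if_admissible_above[OF c])
  fix l assume l: "c < l"
  have "(\<lambda>k. integral\<^sup>L M (\<lambda>x. (hs k x - h x)\<^sup>2) / l\<^sup>2) \<longlonglongrightarrow> 0 / l\<^sup>2"
    using l c by (intro tendsto_divide conv tendsto_const) simp
  then have "(\<lambda>k. integral\<^sup>L M (\<lambda>x. (hs k x / l - h x / l)\<^sup>2)) \<longlonglongrightarrow> 0"
    by (simp add: diff_divide_distrib[symmetric] power_divide)
  then have "E (\<lambda>x. h x / l) \<le> liminf (\<lambda>k. E (\<lambda>x. hs k x / l))"
    by (rule E_lower_semicontinuous[OF L2_divide[OF MSet_L2[OF hs]] L2_divide[OF h]])
  also have "\<dots> \<le> 1"
    using E_le_one_if_lux_less[OF hs] bound l
    by (intro Liminf_le always_eventually allI) (auto intro: le_less_trans)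
  finally show "E (\<lambda>x. h x / l) \<le> 1" .
qed

lemma lux_small_in_convex_sets:
  assumes reflexive: "reflexive_form M E"
    and C: "\<And>k. C k \<subseteq> V" "\<And>k. fun_convex (C k)"
    and xs: "\<And>n k. k \<le> n \<Longrightarrow> xs n \<in> C k" and bounded: "\<And>n. N (xs n) \<le> B"
    and L2_small: "\<And>k h. h \<in> C k \<Longrightarrow> integral\<^sup>L M (\<lambda>x. (h x)\<^sup>2) \<le> \<delta> k" and \<delta>: "\<delta> \<longlonglongrightarrow> 0"
    and e: "e > 0"
  shows "\<exists>k. \<exists>h\<in>C k. N h < e"
proof -
  note V = fun_subspace_MSet and N = seminorm_on_lux
  have xsV: "xs n \<in> V" for n using xs[of 0 n] C(1) by blast
  \<comment> \<open>a weak cluster point of \<open>xs\<close>, represented by an element \<open>g\<close> of \<open>V\<close> up to \<open>e / 2\<close>\<close>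
  obtain \<Psi> where \<Psi>: "\<Psi> \<in> bidual_space V N" and cluster:
    "\<forall>\<phi>\<in>dual_space V N. \<forall>c. eventually (\<lambda>n. c \<le> \<phi> (xs n)) sequentially \<longrightarrow> c \<le> \<Psi> \<phi>"
    using bidual_weak_cluster_point[where xs = xs, OF V N xsV bounded] by blast
  obtain g where g: "g \<in> V" and approx: "bidual_norm V N (\<lambda>\<phi>. \<Psi> \<phi> - canonical_emb g \<phi>) < e / 2"
    using reflexive \<Psi> e unfolding reflexive_form_def by (meson half_gt_zero)
  have close: "\<forall>\<phi>\<in>dual_space V N. dual_norm V N \<phi> \<le> 1 \<longrightarrow> \<bar>\<Psi> \<phi> - \<phi> g\<bar> < e / 2"
    using bidual_norm_ge[OF V N \<Psi> g] approx by (meson le_less_trans)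
  have "\<exists>h\<in>C k. N (\<lambda>x. h x - g x) < e / 2" for k
    using xs by (intro convex_near_weak_cluster_point[OF V N cluster g close C(1,2)]) blast
  then obtain hs where hs: "\<And>k. hs k \<in> C k" "\<And>k. N (\<lambda>x. hs k x - g x) < e / 2" by metis
  have hsV: "hs k \<in> V" for k using hs(1) C(1) by blast
  \<comment> \<open>\<open>hs \<longrightarrow> 0\<close> in \<open>L\<^sup>2\<close>, so lower semicontinuity bounds \<open>N g\<close>\<close>
  have "N g \<le> e / 2"
  proof (rule lux_lower_semicontinuous[where hs = "\<lambda>k x. g x - hs k x"])
    show "(\<lambda>x. g x - hs k x) \<in> V" for k using fun_subspace_diff[OF V g hsV] .
    show "N (\<lambda>x. g x - hs k x) \<le> e / 2" for k
      using lux_uminus[OF fun_subspace_diff[OF V hsV g], of k] hs(2)[of k] by simp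
    have "(\<lambda>k. integral\<^sup>L M (\<lambda>x. (hs k x)\<^sup>2)) \<longlonglongrightarrow> 0"
      using L2_small[OF hs(1)]
      by (intro tendsto_sandwich[OF _ _ tendsto_const \<delta>] always_eventually allI) auto
    then show "(\<lambda>k. integral\<^sup>L M (\<lambda>x. (g x - hs k x - g x)\<^sup>2)) \<longlonglongrightarrow> 0" by simp
  qed (use g MSet_L2 e in auto)
  moreover have "N (hs 0) \<le> N (\<lambda>x. hs 0 x - g x) + N g"
    using lux_add[OF fun_subspace_diff[OF V hsV g] g] by simp
  ultimately have "N (hs 0) < e" using hs(2)[of 0] by linarith
  then show ?thesis using hs(1) by blast
qed

lemma lux_small_contraction:
  assumes reflexive: "reflexive_form M E" and f: "f \<in> V"
    and Ts: "\<And>k T. T \<in> Ts k \<Longrightarrow> normal_contraction T" "\<And>k. fun_convex (Ts k)"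
    and s: "\<And>n k. k \<le> n \<Longrightarrow> s n \<in> Ts k"
    and dominated: "\<And>k T t. T \<in> Ts k \<Longrightarrow> \<bar>T t\<bar> \<le> \<bar>s k t\<bar>" and pointwise: "\<And>t. (\<lambda>k. s k t) \<longlonglongrightarrow> 0"
    and e: "e > 0"
  shows "\<exists>k. \<exists>T\<in>Ts k. N (\<lambda>x. T (f x)) < e"
proof -
  define C where "C k = (\<lambda>T x. T (f x)) ` Ts k" for k
  have s_contraction: "normal_contraction (s k)" for k using Ts(1)[OF s[OF order_refl]] .
  have "\<exists>k. \<exists>h\<in>C k. N h < e"
  proof (rule lux_small_in_convex_sets[OF reflexive, where xs = "\<lambda>n x. s n (f x)"])
    show "C k \<subseteq> V" for k unfolding C_def using MSet_contraction[OF Ts(1) f] by auto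
    show "fun_convex (C k)" for k
      unfolding C_def using Ts(2) by (rule fun_convex_comp_image)
    show "(\<lambda>x. s n (f x)) \<in> C k" if "k \<le> n" for n k
      unfolding C_def by (rule rev_image_eqI[OF s[OF that]]) simp
    show "N (\<lambda>x. s n (f x)) \<le> N f" for n using lux_contraction[OF s_contraction f] .
    show "integral\<^sup>L M (\<lambda>x. (h x)\<^sup>2) \<le> integral\<^sup>L M (\<lambda>x. (s k (f x))\<^sup>2)" if h: "h \<in> C k" for k h
    proof -
      obtain T where T: "T \<in> Ts k" "h = (\<lambda>x. T (f x))" using h unfolding C_def by blast
      have "(T (f x))\<^sup>2 \<le> (s k (f x))\<^sup>2" for x using dominated[OF T(1)] by (simp add: abs_le_square_iff)
      moreover have "integrable M (\<lambda>x. (T (f x))\<^sup>2)" "integrable M (\<lambda>x. (s k (f x))\<^sup>2)"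
        using L2_integrable_square[OF L2_contraction[OF Ts(1)[OF T(1)] MSet_L2[OF f]]]
          L2_integrable_square[OF L2_contraction[OF s_contraction MSet_L2[OF f]]] .
      ultimately show ?thesis unfolding T(2) by (simp add: integral_mono)
    qed
    show "(\<lambda>k. integral\<^sup>L M (\<lambda>x. (s k (f x))\<^sup>2)) \<longlonglongrightarrow> 0"
      using L2_contraction_tendsto_zero[OF MSet_L2[OF f] s_contraction pointwise] .
  qed (use e in auto)
  then show ?thesis unfolding C_def by auto
qed

lemma lux_small_truncation_exists:
  assumes reflexive: "reflexive_form M E" and f: "f \<in> V" and e: "e > 0"
  shows "\<exists>\<epsilon>. \<exists>T\<in>small_truncations \<epsilon>. N (\<lambda>x. T (f x)) < e"
proof -
  define \<epsilon> where "\<epsilon> k = 1 / (real k + 1)" for k :: nat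
  have \<epsilon>: "\<epsilon> k > 0" "\<epsilon> \<longlonglongrightarrow> 0" for k
    unfolding \<epsilon>_def using LIMSEQ_inverse_real_of_nat by (simp_all add: inverse_eq_divide add.commute)
  have "\<exists>k. \<exists>T\<in>small_truncations (\<epsilon> k). N (\<lambda>x. T (f x)) < e"
  proof (rule lux_small_contraction[where Ts = "\<lambda>k. small_truncations (\<epsilon> k)" and s = "\<lambda>k. clamp (\<epsilon> k)",
        OF reflexive f _ _ _ _ _ e])
    show "normal_contraction T" if "T \<in> small_truncations (\<epsilon> k)" for T k
      using that by (rule small_truncations_normal_contraction)
    show "fun_convex (small_truncations (\<epsilon> k))" for k by (rule fun_convex_small_truncations)
    show "\<bar>T t\<bar> \<le> \<bar>clamp (\<epsilon> k) t\<bar>" if "T \<in> small_truncations (\<epsilon> k)" for T k t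
      using that by (rule small_truncations_abs_le)
    show "clamp (\<epsilon> n) \<in> small_truncations (\<epsilon> k)" if "k \<le> n" for n k
      using that \<epsilon>(1) unfolding \<epsilon>_def by (intro clamp_small_truncations) (auto simp: frac_le)
    show "(\<lambda>k. clamp (\<epsilon> k) t) \<longlonglongrightarrow> 0" for t
      using clamp_abs_le[OF less_imp_le[OF \<epsilon>(1)]]
      by (intro Lim_null_comparison[OF always_eventually \<epsilon>(2)]) simp
  qed
  then show ?thesis by blast
qed

lemma lux_clamp_tendsto_zero:
  assumes reflexive: "reflexive_form M E" and f: "f \<in> V"
  shows "((\<lambda>r. N (\<lambda>x. clamp r (f x))) \<longlongrightarrow> 0) (at_right 0)"
proof (rule tendstoI)
  fix e :: real assume "e > 0"
  then obtain \<epsilon> T where T: "T \<in> small_truncations \<epsilon>" and small: "N (\<lambda>x. T (f x)) < e"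
    using lux_small_truncation_exists[OF reflexive f] by blast
  obtain d where d: "d > 0" and comp: "\<forall>y t. 0 < y \<and> y \<le> d \<longrightarrow> clamp y (T t) = clamp y t"
    using clamp_comp_small_truncation[OF T] by blast
  have T_contraction: "normal_contraction T" using T by (rule small_truncations_normal_contraction)
  have "dist (N (\<lambda>x. clamp y (f x))) 0 < e" if y: "0 < y" "y < d" for y
  proof -
    have "N (\<lambda>x. clamp y (f x)) = N (\<lambda>x. clamp y (T (f x)))"
      using comp y by simp
    also have "\<dots> \<le> N (\<lambda>x. T (f x))"
      using lux_contraction[OF clamp_normal_contraction MSet_contraction[OF T_contraction f]] y by simp
    finally show ?thesis
      using small lux_nonneg[OF MSet_contraction[OF clamp_normal_contraction f]] y by simp
  qed
  then show "eventually (\<lambda>y. dist (N (\<lambda>x. clamp y (f x))) 0 < e) (at_right 0)"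
    unfolding eventually_at_right_field using d by blast
qed

lemma lux_tail_truncation_exists:
  assumes reflexive: "reflexive_form M E" and f: "f \<in> V" and e: "e > 0"
  shows "\<exists>r. \<exists>T\<in>tail_truncations r. N (\<lambda>x. T (f x)) < e"
proof -
  have "\<exists>k. \<exists>T\<in>tail_truncations (real k). N (\<lambda>x. T (f x)) < e"
  proof (rule lux_small_contraction[where Ts = "\<lambda>k. tail_truncations (real k)"
        and s = "\<lambda>k. soft_threshold (real k)", OF reflexive f _ _ _ _ _ e])
    show "normal_contraction T" if "T \<in> tail_truncations (real k)" for T k
      using that by (rule tail_truncations_normal_contraction)
    show "fun_convex (tail_truncations (real k))" for k by (rule fun_convex_tail_truncations)
    show "soft_threshold (real n) \<in> tail_truncations (real k)" if "k \<le> n" for n k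
      using that by (intro soft_threshold_tail_truncations) auto
    show "\<bar>T t\<bar> \<le> \<bar>soft_threshold (real k) t\<bar>" if "T \<in> tail_truncations (real k)" for T k t
      using that by (rule tail_truncations_abs_le)
    show "(\<lambda>k. soft_threshold (real k) t) \<longlonglongrightarrow> 0" for t
    proof (rule tendsto_eventually)
      have "soft_threshold (real k) t = 0" if "nat \<lceil>\<bar>t\<bar>\<rceil> \<le> k" for k
        using that by (intro soft_threshold_eq_0) linarith
      then show "eventually (\<lambda>k. soft_threshold (real k) t = 0) sequentially"
        unfolding eventually_sequentially by blast
    qed
  qed
  then show ?thesis by blast
qed

lemma lux_clamp_tendsto_self:
  assumes reflexive: "reflexive_form M E" and f: "f \<in> V"
  shows "((\<lambda>R. N (\<lambda>x. clamp R (f x) - f x)) \<longlongrightarrow> 0) at_top"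
proof (rule tendstoI)
  fix e :: real assume "e > 0"
  then obtain r T where T: "T \<in> tail_truncations r" and small: "N (\<lambda>x. T (f x)) < e"
    using lux_tail_truncation_exists[OF reflexive f] by blast
  obtain B c where c: "0 \<le> c" "c \<le> B"
    and comp: "\<forall>R t. B \<le> R \<longrightarrow> soft_threshold R t = soft_threshold (R - c) (T t)"
    using soft_threshold_comp_tail_truncation[OF T] by blast
  have T_contraction: "normal_contraction T" using T by (rule tail_truncations_normal_contraction)
  have "dist (N (\<lambda>x. clamp R (f x) - f x)) 0 < e" if R: "B \<le> R" for R
  proof -
    have softV: "(\<lambda>x. soft_threshold R (f x)) \<in> V"
      using MSet_contraction[OF soft_threshold_normal_contraction f] c R by simp
    have "N (\<lambda>x. clamp R (f x) - f x) = N (\<lambda>x. soft_threshold R (f x))"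
      using lux_uminus[OF softV] unfolding soft_threshold_def by simp
    also have "\<dots> = N (\<lambda>x. soft_threshold (R - c) (T (f x)))" using comp R by simp
    also have "\<dots> \<le> N (\<lambda>x. T (f x))"
      using lux_contraction[OF soft_threshold_normal_contraction MSet_contraction[OF T_contraction f]] c R
      by simp
    finally show ?thesis using small lux_nonneg[OF softV] lux_uminus[OF softV]
      unfolding soft_threshold_def by simp
  qed
  then show "eventually (\<lambda>R. dist (N (\<lambda>x. clamp R (f x) - f x)) 0 < e) at_top"
    unfolding eventually_at_top_linorder by blast
qed

lemma lux_clamp_band:
  assumes reflexive: "reflexive_form M E" and g: "g \<in> V" and e: "e > 0"
  shows "\<exists>d R. 0 < d \<and> d \<le> R \<and> N (\<lambda>x. clamp d (g x)) < e \<and> N (\<lambda>x. clamp R (g x) - g x) < e"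
proof -
  have "eventually (\<lambda>r. N (\<lambda>x. clamp r (g x)) < e) (at_right 0)"
    using order_tendstoD(2)[OF lux_clamp_tendsto_zero[OF reflexive g] e] by simp
  then obtain b where b: "b > 0" "\<And>r. 0 < r \<Longrightarrow> r < b \<Longrightarrow> N (\<lambda>x. clamp r (g x)) < e"
    unfolding eventually_at_right_field by auto
  have "eventually (\<lambda>R. N (\<lambda>x. clamp R (g x) - g x) < e) at_top"
    using order_tendstoD(2)[OF lux_clamp_tendsto_self[OF reflexive g] e] by simp
  then obtain R where R: "\<And>R'. R \<le> R' \<Longrightarrow> N (\<lambda>x. clamp R' (g x) - g x) < e"
    unfolding eventually_at_top_linorder by auto
  have "N (\<lambda>x. clamp (b / 2) (g x)) < e" using b by simp
  moreover have "N (\<lambda>x. clamp (max R (b / 2)) (g x) - g x) < e" using R[of "max R (b / 2)"] by simp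
  ultimately show ?thesis using b(1) by (intro exI[of _ "b / 2"] exI[of _ "max R (b / 2)"]) simp
qed

lemma MSet_bounded_integrable_dense:
  assumes reflexive: "reflexive_form M E" and g: "g \<in> V" and e: "e > 0"
  shows "\<exists>h\<in>V. integrable M h \<and> (\<exists>K. AE x in M. \<bar>h x\<bar> \<le> K) \<and> N (\<lambda>x. h x - g x) < e"
proof -
  obtain d R where d: "0 < d" "N (\<lambda>x. clamp d (g x)) < e / 2"
    and R: "d \<le> R" "N (\<lambda>x. clamp R (g x) - g x) < e / 2"
    using lux_clamp_band[OF reflexive g, of "e / 2"] e by auto
  define h where "h x = clamp R (g x) - clamp d (g x)" for x
  have hV: "h \<in> V"
    unfolding h_def using MSet_contraction[OF clamp_diff_normal_contraction g] d R by simp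
  have "integrable M h"
  proof (rule Bochner_Integration.integrable_bound)
    show "integrable M (\<lambda>x. (g x)\<^sup>2 / d)" using L2_integrable_square[OF MSet_L2[OF g]] by simp
    show "h \<in> borel_measurable M" using L2_borel_measurable[OF MSet_L2[OF hV]] .
    show "AE x in M. norm (h x) \<le> norm ((g x)\<^sup>2 / d)"
      unfolding h_def using clamp_diff_abs_le[OF d(1) R(1)] d(1) by auto
  qed
  moreover have "AE x in M. \<bar>h x\<bar> \<le> R + d"
    unfolding h_def using clamp_abs_le[of R] clamp_abs_le[of d] d R
    by (intro AE_I2 order_trans[OF abs_triangle_ineq4 add_mono]) auto
  moreover have "N (\<lambda>x. h x - g x) < e"
  proof -
    have dV: "(\<lambda>x. clamp d (g x)) \<in> V" using MSet_contraction[OF clamp_normal_contraction g] d by simp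
    have RV: "(\<lambda>x. clamp R (g x) - g x) \<in> V"
      using fun_subspace_diff[OF fun_subspace_MSet MSet_contraction[OF clamp_normal_contraction g] g] d R
      by simp
    have "N (\<lambda>x. h x - g x) = N (\<lambda>x. (clamp R (g x) - g x) + - clamp d (g x))"
      unfolding h_def by (simp add: algebra_simps)
    also have "\<dots> \<le> N (\<lambda>x. clamp R (g x) - g x) + N (\<lambda>x. clamp d (g x))"
      using lux_add[OF RV fun_subspace_uminus[OF fun_subspace_MSet dV]] lux_uminus[OF dV] by simp
    finally show ?thesis using R(2) d(2) by simp
  qed
  ultimately show ?thesis using hV by blast
qed

end

theorem lemma3p4:
  fixes M :: "'a measure" and E :: "('a \<Rightarrow> real) \<Rightarrow> ennreal" and f :: "'a \<Rightarrow> real"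
  assumes "sigma_finite_measure M"
    and "nonlinear_dirichlet_form M E"
    and "reflexive_form M E"
    and "f \<in> MSet M E"
  shows "((\<lambda>e. lux_norm E (\<lambda>x. clamp e (f x))) \<longlongrightarrow> 0) (at_right 0)
     \<and> ((\<lambda>R. lux_norm E (\<lambda>x. clamp R (f x) - f x)) \<longlongrightarrow> 0) at_top
     \<and> (\<forall>g\<in>MSet M E. \<forall>e>0. \<exists>h\<in>MSet M E. integrable M h \<and> (\<exists>K. AE x in M. \<bar>h x\<bar> \<le> K)
            \<and> lux_norm E (\<lambda>x. h x - g x) < e)"
proof -
  interpret nonlinear_dirichlet M E by unfold_locales (rule assms(2))
  show ?thesis
    using lux_clamp_tendsto_zero[OF assms(3,4)] lux_clamp_tendsto_self[OF assms(3,4)]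
      MSet_bounded_integrable_dense[OF assms(3)]
    by blast
qed

end
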